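(* Let $b$ be a finite Blaschke product with $N$ zeros. If $S^{(1)}=\{S^{(1)}_i\}_{i=1}^N$ and $S^{(2)}=\{S^{(2)}_i\}_{i=1}^N$ are Cuntz families on $L^2(\mathbb{T})$ with $\alpha_{S^{(k)}}\circ\pi=\pi\circ\beta$ for $k=1,2$, then there is a unitary matrix $(u_{ij})\in M_N(L^\infty(\mathbb{T}))$ such that $$S^{(2)}_j=\sum_{i=1}^N S^{(1)}_i\pi(u_{ij}),\qquad j=1,\dots,N.$$ Conversely, if $S^{(1)},S^{(2)}$ are Cuntz families on $L^2(\mathbb{T})$ linked by this equation for some unitary $(u_{ij})\in M_N(L^\infty(\mathbb{T}))$, then $\alpha_{S^{(1)}}\circ\pi=\pi\circ\beta$ if and only if $\alpha_{S^{(2)}}\circ\pi=\pi\circ\beta$. Further, in that situation $\alpha_{S^{(1)}}=\alpha_{S^{(2)}}$ on $B(L^2(\mathbb{T}))$ if and only if $(u_{ij})$ is a unitary matrix of constant functions.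
   Context: $b=\prod_{j=1}^N b_{\alpha_j}$ is a finite Blaschke product with $N$ zeros in $\mathbb{D}$ ($b_w(z)=\frac{|w|}{w}\frac{w-z}{1-\overline{w}z}$, $b_0(z)=z$); $\beta(\varphi)=\varphi\circ b$ on $L^\infty(\mathbb{T})$. $\pi(\varphi)$ is multiplication by $\varphi$ on $L^2(\mathbb{T})$. A Cuntz family $\{S_i\}_{i=1}^N$ on a Hilbert space $H$ consists of isometries with $S_i^*S_j=\delta_{ij}I$ and $\sum_iS_iS_i^*=I$, and $\alpha_S(T)=\sum_iS_iTS_i^*$ for $T\in B(H)$. A matrix $U\in M_N(L^\infty(\mathbb{T}))$ is unitary if $UU^*=U^*U=I$. *)

theory Defs
  imports "HOL-Analysis.Analysis"
begin

definition circle_measure :: "complex measure" where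
  "circle_measure = distr (uniform_measure lborel {0..<2*pi}) borel cis"

text \<open>Elements of L2(T) and L-infinity(T) are represented by measurable functions
  complex => complex (representatives); equality is equality almost everywhere.\<close>

definition ae_eq :: "(complex \<Rightarrow> complex) \<Rightarrow> (complex \<Rightarrow> complex) \<Rightarrow> bool" where
  "ae_eq f g \<longleftrightarrow> (AE z in circle_measure. f z = g z)"

definition L2 :: "(complex \<Rightarrow> complex) \<Rightarrow> bool" where
  "L2 f \<longleftrightarrow> f \<in> borel_measurable circle_measure \<and>
     integrable circle_measure (\<lambda>z. (cmod (f z))^2)"

definition Linf :: "(complex \<Rightarrow> complex) \<Rightarrow> bool" where
  "Linf \<phi> \<longleftrightarrow> \<phi> \<in> borel_measurable circle_measure \<and>
     (\<exists>C. AE z in circle_measure. cmod (\<phi> z) \<le> C)"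

definition inner2 :: "(complex \<Rightarrow> complex) \<Rightarrow> (complex \<Rightarrow> complex) \<Rightarrow> complex" where
  "inner2 f g = (LINT z|circle_measure. f z * cnj (g z))"

definition norm2 :: "(complex \<Rightarrow> complex) \<Rightarrow> real" where
  "norm2 f = sqrt (LINT z|circle_measure. (cmod (f z))^2)"

type_synonym op = "(complex \<Rightarrow> complex) \<Rightarrow> (complex \<Rightarrow> complex)"

definition bounded_op :: "op \<Rightarrow> bool" where
  "bounded_op T \<longleftrightarrow>
     (\<forall>f. L2 f \<longrightarrow> L2 (T f)) \<and>
     (\<forall>f g. L2 f \<longrightarrow> L2 g \<longrightarrow> ae_eq f g \<longrightarrow> ae_eq (T f) (T g)) \<and>
     (\<forall>f g c. L2 f \<longrightarrow> L2 g \<longrightarrow>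
         ae_eq (T (\<lambda>z. c * f z + g z)) (\<lambda>z. c * T f z + T g z)) \<and>
     (\<exists>C. \<forall>f. L2 f \<longrightarrow> norm2 (T f) \<le> C * norm2 f)"

definition op_eq :: "op \<Rightarrow> op \<Rightarrow> bool" where
  "op_eq T1 T2 \<longleftrightarrow> (\<forall>f. L2 f \<longrightarrow> ae_eq (T1 f) (T2 f))"

definition adj :: "op \<Rightarrow> op" where
  "adj T = (SOME T'. bounded_op T' \<and>
      (\<forall>f g. L2 f \<longrightarrow> L2 g \<longrightarrow> inner2 (T f) g = inner2 f (T' g)))"

definition zero_op :: op where "zero_op = (\<lambda>f z. 0)"

definition isometry :: "op \<Rightarrow> bool" where
  "isometry S \<longleftrightarrow> (\<forall>f. L2 f \<longrightarrow> norm2 (S f) = norm2 f)"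

definition cuntz_family :: "nat \<Rightarrow> (nat \<Rightarrow> op) \<Rightarrow> bool" where
  "cuntz_family N S \<longleftrightarrow>
     (\<forall>i<N. bounded_op (S i) \<and> isometry (S i)) \<and>
     (\<forall>i<N. \<forall>j<N. op_eq (adj (S i) \<circ> S j) (if i = j then id else zero_op)) \<and>
     op_eq (\<lambda>f z. \<Sum>i<N. S i (adj (S i) f) z) id"

definition alphaS :: "nat \<Rightarrow> (nat \<Rightarrow> op) \<Rightarrow> op \<Rightarrow> op" where
  "alphaS N S T = (\<lambda>f z. \<Sum>i<N. S i (T (adj (S i) f)) z)"

definition mult_op :: "(complex \<Rightarrow> complex) \<Rightarrow> op" where
  "mult_op \<phi> = (\<lambda>f z. \<phi> z * f z)"

definition blaschke_factor :: "complex \<Rightarrow> complex \<Rightarrow> complex" where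
  "blaschke_factor w z =
     (if w = 0 then z else (of_real (cmod w) / w) * ((w - z) / (1 - cnj w * z)))"

definition blaschke :: "nat \<Rightarrow> (nat \<Rightarrow> complex) \<Rightarrow> complex \<Rightarrow> complex" where
  "blaschke N a z = (\<Prod>j<N. blaschke_factor (a j) z)"

definition beta :: "nat \<Rightarrow> (nat \<Rightarrow> complex) \<Rightarrow> (complex \<Rightarrow> complex) \<Rightarrow> (complex \<Rightarrow> complex)" where
  "beta N a \<phi> = \<phi> \<circ> blaschke N a"

definition intertwines :: "nat \<Rightarrow> (nat \<Rightarrow> op) \<Rightarrow> (nat \<Rightarrow> complex) \<Rightarrow> bool" where
  "intertwines N S a \<longleftrightarrow>
     (\<forall>\<phi>. Linf \<phi> \<longrightarrow> op_eq (alphaS N S (mult_op \<phi>)) (mult_op (beta N a \<phi>)))"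

definition unitary_Linf :: "nat \<Rightarrow> (nat \<Rightarrow> nat \<Rightarrow> complex \<Rightarrow> complex) \<Rightarrow> bool" where
  "unitary_Linf N u \<longleftrightarrow>
     (\<forall>i<N. \<forall>j<N. Linf (u i j)) \<and>
     (\<forall>i<N. \<forall>j<N. ae_eq (\<lambda>z. \<Sum>k<N. u i k z * cnj (u j k z)) (\<lambda>z. if i = j then 1 else 0)) \<and>
     (\<forall>i<N. \<forall>j<N. ae_eq (\<lambda>z. \<Sum>k<N. cnj (u k i z) * u k j z) (\<lambda>z. if i = j then 1 else 0))"

definition constant_matrix :: "nat \<Rightarrow> (nat \<Rightarrow> nat \<Rightarrow> complex \<Rightarrow> complex) \<Rightarrow> bool" where
  "constant_matrix N u \<longleftrightarrow> (\<exists>c. \<forall>i<N. \<forall>j<N. ae_eq (u i j) (\<lambda>z. c i j))"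

definition linked :: "nat \<Rightarrow> (nat \<Rightarrow> op) \<Rightarrow> (nat \<Rightarrow> op) \<Rightarrow> (nat \<Rightarrow> nat \<Rightarrow> complex \<Rightarrow> complex) \<Rightarrow> bool" where
  "linked N S1 S2 u \<longleftrightarrow>
     (\<forall>j<N. op_eq (S2 j) (\<lambda>f z. \<Sum>i<N. S1 i (mult_op (u i j) f) z))"

end

theory Submission
  imports Defs "HOL-Probability.Probability_Measure"
begin

(*
  The argument revolves around the "transition operators" X_ij = S1_i* S2_j, which satisfy
  S2_j = sum_i S1_i X_ij.  Hence if
     alpha_S1 and alpha_S2 agree on T, every X_ij commutes with T.
  4. S2 is linked to S1 by u iff X_ij = pi(u_ij) for all i, j, and then u is unitary.
  For the direct part, alpha_S1 and alpha_S2 agree on pi(L-infinity), so (3), (2), (4) give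
  the unitary.  For the converse, alpha_S2(T) is expanded through u; the resulting row
  identity holds for T = pi(phi) by unitarity and for every T if u is constant.  Finally, if
  alpha_S1 = alpha_S2, the X_ij commute with the projection onto the constants, which forces
  the u_ij to be constant.
*)

lemma prob_space_circle: "prob_space circle_measure"
proof -
  have "cis \<in> borel_measurable borel"
    by (intro borel_measurable_continuous_onI continuous_intros)
  then show ?thesis
    unfolding circle_measure_def
    by (intro prob_space.prob_space_distr prob_space_uniform_measure)
       (auto simp: measurable_cong_sets[OF sets_uniform_measure refl])
qed

lemma sets_circle[simp, measurable_cong]: "sets circle_measure = sets borel"
  by (simp add: circle_measure_def)

interpretation C: prob_space circle_measure by (rule prob_space_circle)

abbreviation "M \<equiv> circle_measure"

lemma borel_M_iff: "f \<in> borel_measurable M \<longleftrightarrow> f \<in> borel_measurable borel"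
  by (subst measurable_cong_sets[OF sets_circle refl, of borel]) (rule refl)

lemma borel_measurable_cnj[measurable]:
  "f \<in> borel_measurable N \<Longrightarrow> (\<lambda>x. cnj (f x)) \<in> borel_measurable N"
  by (rule borel_measurable_continuous_on[where f=cnj]) (auto intro: continuous_intros)

lemma ae_eq_refl[simp]: "ae_eq f f"
  by (simp add: ae_eq_def)

lemma ae_eq_sym: "ae_eq f g \<Longrightarrow> ae_eq g f"
  by (simp add: ae_eq_def eq_commute)

lemma ae_eq_trans[trans]: "ae_eq f g \<Longrightarrow> ae_eq g h \<Longrightarrow> ae_eq f h"
  by (auto simp: ae_eq_def elim: AE_mp)

lemma ae_eq_mult: "ae_eq f g \<Longrightarrow> ae_eq (\<lambda>z. \<phi> z * f z) (\<lambda>z. \<phi> z * g z)"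
  unfolding ae_eq_def by (auto elim: AE_mp)

lemma ae_eq_sum:
  assumes "finite I" "\<And>i. i \<in> I \<Longrightarrow> ae_eq (F i) (G i)"
  shows "ae_eq (\<lambda>z. \<Sum>i\<in>I. F i z) (\<lambda>z. \<Sum>i\<in>I. G i z)"
proof -
  have "AE z in M. \<forall>i\<in>I. F i z = G i z"
    using assms unfolding ae_eq_def by (intro eventually_ball_finite) auto
  then show ?thesis unfolding ae_eq_def by eventually_elim simp
qed

lemma ae_eq_all_pairs:
  assumes "\<And>i j. i < (N::nat) \<Longrightarrow> j < N \<Longrightarrow> ae_eq (F i j) (G i j)"
  shows "AE z in M. \<forall>i<N. \<forall>j<N. F i j z = G i j z"
proof -
  have "AE z in M. \<forall>i\<in>{..<N}. \<forall>j\<in>{..<N}. F i j z = G i j z"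
    using assms unfolding ae_eq_def by (intro eventually_ball_finite ballI) auto
  then show ?thesis by eventually_elim auto
qed

lemma L2_iff: "L2 f \<longleftrightarrow> f \<in> borel_measurable borel \<and> integrable M (\<lambda>z. (cmod (f z))^2)"
  by (simp add: L2_def borel_M_iff)

lemma L2_meas: "L2 f \<Longrightarrow> f \<in> borel_measurable borel"
  by (simp add: L2_iff)

lemma L2_int: "L2 f \<Longrightarrow> integrable M (\<lambda>z. (cmod (f z))^2)"
  by (simp add: L2_iff)

lemma L2_bound:
  assumes "f \<in> borel_measurable borel" "g \<in> borel_measurable borel" "integrable M g"
    "\<And>z. (cmod (f z))^2 \<le> g z"
  shows "L2 f"
  unfolding L2_iff
proof (intro conjI assms(1) Bochner_Integration.integrable_bound[OF assms(3)])
  show "(\<lambda>z. (cmod (f z))\<^sup>2) \<in> borel_measurable M" using assms(1) by measurable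
  show "AE x in M. norm ((cmod (f x))\<^sup>2) \<le> norm (g x)"
    using assms(4) by (auto intro!: order_trans[OF _ abs_ge_self])
qed

lemma L2_add_scale:
  assumes f: "L2 f" and g: "L2 g"
  shows "L2 (\<lambda>z. c * f z + g z)"
proof (rule L2_bound[where g="\<lambda>z. 2 * (cmod c)^2 * (cmod (f z))^2 + 2 * (cmod (g z))^2"])
  show "(\<lambda>z. c * f z + g z) \<in> borel_measurable borel"
    using L2_meas[OF f] L2_meas[OF g] by measurable
  show "(\<lambda>z. 2 * (cmod c)^2 * (cmod (f z))^2 + 2 * (cmod (g z))^2) \<in> borel_measurable borel"
    using L2_meas[OF f] L2_meas[OF g] by measurable
  show "integrable M (\<lambda>z. 2 * (cmod c)^2 * (cmod (f z))^2 + 2 * (cmod (g z))^2)"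
    using L2_int[OF f] L2_int[OF g] by auto
  fix z
  have "cmod (c * f z + g z) \<le> cmod c * cmod (f z) + cmod (g z)"
    by (metis norm_mult norm_triangle_ineq)
  then have "(cmod (c * f z + g z))^2 \<le> (cmod c * cmod (f z) + cmod (g z))^2"
    by (intro power_mono) auto
  also have "\<dots> \<le> 2 * (cmod c * cmod (f z))^2 + 2 * (cmod (g z))^2"
    using sum_squares_bound[of "cmod c * cmod (f z)" "cmod (g z)"] unfolding power2_sum by linarith
  finally show "(cmod (c * f z + g z))^2 \<le> 2 * (cmod c)^2 * (cmod (f z))^2 + 2 * (cmod (g z))^2"
    by (simp add: power_mult_distrib)
qed

lemma L2_const[simp]: "L2 (\<lambda>z. c)"
  by (simp add: L2_iff)

lemma L2_add: "L2 f \<Longrightarrow> L2 g \<Longrightarrow> L2 (\<lambda>z. f z + g z)"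
  using L2_add_scale[of f g 1] by simp

lemma L2_scale: "L2 f \<Longrightarrow> L2 (\<lambda>z. c * f z)"
  using L2_add_scale[of f "\<lambda>z. 0" c] by simp

lemma L2_minus: "L2 f \<Longrightarrow> L2 g \<Longrightarrow> L2 (\<lambda>z. f z - g z)"
  using L2_add_scale[of g f "-1"] by simp

lemma L2_sum: "(\<And>i. i \<in> I \<Longrightarrow> L2 (F i)) \<Longrightarrow> L2 (\<lambda>z. \<Sum>i\<in>I. F i z)"
proof (induction I rule: infinite_finite_induct)
  case (insert x F) then show ?case by (simp add: L2_add)
qed auto

lemma Linf_meas: "Linf \<phi> \<Longrightarrow> \<phi> \<in> borel_measurable borel"
  by (simp add: Linf_def borel_M_iff)

lemma Linf_bound: "Linf \<phi> \<Longrightarrow> \<exists>C\<ge>0. AE z in M. cmod (\<phi> z) \<le> C"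
proof -
  assume "Linf \<phi>"
  then obtain C where "AE z in M. cmod (\<phi> z) \<le> C" unfolding Linf_def by blast
  then have "AE z in M. cmod (\<phi> z) \<le> max C 0" by eventually_elim auto
  then show ?thesis by (intro exI[of _ "max C 0"]) auto
qed

lemma Linf_cnj: "Linf \<phi> \<Longrightarrow> Linf (\<lambda>z. cnj (\<phi> z))"
  unfolding Linf_def by (auto simp: borel_M_iff)

lemma L2_mult_Linf_bound:
  assumes "L2 f" and "AE z in M. cmod (\<phi> z) \<le> C" and "\<phi> \<in> borel_measurable borel"
  shows "L2 (\<lambda>z. \<phi> z * f z)"
    and "(LINT z|M. (cmod (\<phi> z * f z))^2) \<le> C^2 * (LINT z|M. (cmod (f z))^2)"
proof -
  have [measurable]: "f \<in> borel_measurable borel" "\<phi> \<in> borel_measurable borel"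
    using assms L2_meas by auto
  have bound: "AE z in M. (cmod (\<phi> z * f z))^2 \<le> C^2 * (cmod (f z))^2"
    using assms(2) by eventually_elim
      (auto simp: norm_mult power_mult_distrib intro!: mult_right_mono power_mono)
  have int: "integrable M (\<lambda>z. (cmod (\<phi> z * f z))^2)"
  proof (rule Bochner_Integration.integrable_bound[of _ "\<lambda>z. C^2 * (cmod (f z))^2"])
    show "integrable M (\<lambda>z. C^2 * (cmod (f z))^2)" using L2_int[OF assms(1)] by simp
    show "AE z in M. norm ((cmod (\<phi> z * f z))^2) \<le> norm (C^2 * (cmod (f z))^2)"
      using bound by eventually_elim simp
  qed measurable
  then show "L2 (\<lambda>z. \<phi> z * f z)" by (simp add: L2_iff)
  show "(LINT z|M. (cmod (\<phi> z * f z))^2) \<le> C^2 * (LINT z|M. (cmod (f z))^2)"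
    using integral_mono_AE[OF int _ bound] L2_int[OF assms(1)] by simp
qed

lemma L2_mult_Linf: "Linf \<phi> \<Longrightarrow> L2 f \<Longrightarrow> L2 (\<lambda>z. \<phi> z * f z)"
  using L2_mult_Linf_bound(1) Linf_meas Linf_def by blast

lemma Linf_L2: "Linf \<phi> \<Longrightarrow> L2 \<phi>"
  using L2_mult_Linf[of \<phi> "\<lambda>z. 1"] by simp

lemma L2_integrable_prod:
  assumes "L2 f" "L2 g"
  shows "integrable M (\<lambda>z. f z * cnj (g z))"
proof (rule Bochner_Integration.integrable_bound[of _ "\<lambda>z. (cmod (f z))^2 + (cmod (g z))^2"])
  show "integrable M (\<lambda>z. (cmod (f z))^2 + (cmod (g z))^2)"
    using L2_int[OF assms(1)] L2_int[OF assms(2)] by auto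
  show "(\<lambda>z. f z * cnj (g z)) \<in> borel_measurable M"
    using L2_meas[OF assms(1)] L2_meas[OF assms(2)] by measurable
  show "AE x in M. norm (f x * cnj (g x)) \<le> norm ((cmod (f x))\<^sup>2 + (cmod (g x))\<^sup>2)"
  proof (intro AE_I2)
    fix x
    have "2 * cmod (f x) * cmod (g x) \<le> (cmod (f x))^2 + (cmod (g x))^2"
      by (rule sum_squares_bound)
    moreover have "0 \<le> cmod (f x) * cmod (g x)" by simp
    ultimately have "cmod (f x) * cmod (g x) \<le> (cmod (f x))^2 + (cmod (g x))^2" by linarith
    then show "norm (f x * cnj (g x)) \<le> norm ((cmod (f x))\<^sup>2 + (cmod (g x))\<^sup>2)"
      by (simp add: norm_mult)
  qed
qed

lemma L2_integrable: "L2 f \<Longrightarrow> integrable M f"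
  using L2_integrable_prod[of f "\<lambda>z. 1"] by simp

lemma inner2_add_scale_left:
  assumes "L2 f" "L2 g" "L2 h"
  shows "inner2 (\<lambda>z. c * f z + g z) h = c * inner2 f h + inner2 g h"
proof -
  have "inner2 (\<lambda>z. c * f z + g z) h = (LINT z|M. c * (f z * cnj (h z)) + g z * cnj (h z))"
    unfolding inner2_def by (simp add: algebra_simps)
  also have "\<dots> = c * inner2 f h + inner2 g h"
    unfolding inner2_def using L2_integrable_prod[OF assms(1,3)] L2_integrable_prod[OF assms(2,3)]
    by simp
  finally show ?thesis .
qed

lemma inner2_cnj: "inner2 g f = cnj (inner2 f g)"
  unfolding inner2_def by (subst Bochner_Integration.integral_cnj[symmetric]) (simp add: mult.commute)

lemma inner2_add_scale_right:
  assumes "L2 f" "L2 g" "L2 h"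
  shows "inner2 h (\<lambda>z. c * f z + g z) = cnj c * inner2 h f + inner2 h g"
  using inner2_add_scale_left[OF assms, of c] inner2_cnj[of h] by simp

lemma inner2_add_left: "L2 f \<Longrightarrow> L2 g \<Longrightarrow> L2 h \<Longrightarrow> inner2 (\<lambda>z. f z + g z) h = inner2 f h + inner2 g h"
  using inner2_add_scale_left[of f g h 1] by simp

lemma inner2_scale_left: "L2 f \<Longrightarrow> L2 h \<Longrightarrow> inner2 (\<lambda>z. c * f z) h = c * inner2 f h"
  using inner2_add_scale_left[of f "\<lambda>z. 0" h c] by (simp add: inner2_def)

lemma inner2_minus_left: "L2 f \<Longrightarrow> L2 g \<Longrightarrow> L2 h \<Longrightarrow> inner2 (\<lambda>z. f z - g z) h = inner2 f h - inner2 g h"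
  using inner2_add_scale_left[of g f h "-1"] by (simp add: algebra_simps)

lemma inner2_add_right: "L2 f \<Longrightarrow> L2 g \<Longrightarrow> L2 h \<Longrightarrow> inner2 h (\<lambda>z. f z + g z) = inner2 h f + inner2 h g"
  using inner2_add_scale_right[of f g h 1] by simp

lemma inner2_scale_right: "L2 f \<Longrightarrow> L2 h \<Longrightarrow> inner2 h (\<lambda>z. c * f z) = cnj c * inner2 h f"
  using inner2_add_scale_right[of f "\<lambda>z. 0" h c] by (simp add: inner2_def)

lemma inner2_minus_right: "L2 f \<Longrightarrow> L2 g \<Longrightarrow> L2 h \<Longrightarrow> inner2 h (\<lambda>z. f z - g z) = inner2 h f - inner2 h g"
  using inner2_add_scale_right[of g f h "-1"] by (simp add: algebra_simps)

lemma inner2_mult: "inner2 (\<lambda>z. \<phi> z * f z) g = inner2 f (\<lambda>z. cnj (\<phi> z) * g z)"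
  unfolding inner2_def by (simp add: algebra_simps)

lemma inner2_ae_left:
  assumes "L2 f" "L2 f'" "L2 h" "ae_eq f f'"
  shows "inner2 f h = inner2 f' h"
proof -
  have [measurable]: "f \<in> borel_measurable borel" "f' \<in> borel_measurable borel" "h \<in> borel_measurable borel"
    using assms L2_meas by auto
  show ?thesis unfolding inner2_def
    by (intro integral_cong_AE) (measurable, use assms(4) in \<open>auto simp: ae_eq_def elim!: AE_mp\<close>)
qed

lemma inner2_ae_right:
  assumes "L2 f" "L2 f'" "L2 h" "ae_eq f f'"
  shows "inner2 h f = inner2 h f'"
  using inner2_ae_left[OF assms] inner2_cnj[of h] by simp

lemma norm2_nonneg: "0 \<le> norm2 f"
  by (simp add: norm2_def)

lemma norm2_sq: "L2 f \<Longrightarrow> (norm2 f)^2 = (LINT z|M. (cmod (f z))^2)"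
  unfolding norm2_def by (simp add: integral_nonneg_AE)

lemma inner2_self:
  assumes "L2 f"
  shows "inner2 f f = complex_of_real ((norm2 f)^2)"
proof -
  have "\<And>z. f z * cnj (f z) = complex_of_real ((cmod (f z))^2)"
    by (rule complex_norm_square[symmetric])
  then have "inner2 f f = (LINT z|M. complex_of_real ((cmod (f z))^2))"
    unfolding inner2_def by presburger
  also have "\<dots> = complex_of_real (LINT z|M. (cmod (f z))^2)"
    by (rule Bochner_Integration.integral_complex_of_real)
  finally show ?thesis by (simp add: norm2_sq[OF assms])
qed

lemma norm2_ae: "L2 f \<Longrightarrow> L2 g \<Longrightarrow> ae_eq f g \<Longrightarrow> norm2 f = norm2 g"
  using inner2_self[of f] inner2_self[of g] inner2_ae_left[of f g f] inner2_ae_right[of f g g]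
  by (simp add: norm2_def)

lemma norm2_eq_0:
  assumes "L2 f"
  shows "norm2 f = 0 \<longleftrightarrow> ae_eq f (\<lambda>z. 0)"
proof -
  have "norm2 f = 0 \<longleftrightarrow> (LINT z|M. (cmod (f z))^2) = 0"
    using norm2_sq[OF assms] norm2_nonneg[of f] by (metis power_eq_0_iff zero_less_numeral)
  also have "\<dots> \<longleftrightarrow> (AE z in M. (cmod (f z))^2 = 0)"
    by (rule integral_nonneg_eq_0_iff_AE) (auto simp: L2_int[OF assms])
  finally show ?thesis by (simp add: ae_eq_def)
qed

lemma norm2_scale: "norm2 (\<lambda>z. c * f z) = cmod c * norm2 f"
  unfolding norm2_def by (simp add: norm_mult power_mult_distrib real_sqrt_mult)

lemma norm2_const: "norm2 (\<lambda>z. c) = cmod c"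
  unfolding norm2_def using C.prob_space by simp

lemma ae_eq_if_inner2_left:
  assumes "L2 d" "L2 e" "\<And>h. L2 h \<Longrightarrow> inner2 d h = inner2 e h"
  shows "ae_eq d e"
proof -
  have m: "L2 (\<lambda>z. d z - e z)" using assms L2_minus by auto
  have "inner2 (\<lambda>z. d z - e z) (\<lambda>z. d z - e z) = 0"
    using assms(3)[OF m] by (simp add: inner2_minus_left assms m)
  then have "norm2 (\<lambda>z. d z - e z) = 0" using inner2_self[OF m] by simp
  then have "ae_eq (\<lambda>z. d z - e z) (\<lambda>z. 0)" using norm2_eq_0[OF m] by simp
  then show ?thesis by (simp add: ae_eq_def)
qed

lemma ae_eq_if_inner2_right:
  assumes "L2 d" "L2 e" "\<And>h. L2 h \<Longrightarrow> inner2 h d = inner2 h e"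
  shows "ae_eq d e"
proof (rule ae_eq_if_inner2_left[OF assms(1,2)])
  fix h assume "L2 h"
  have "inner2 d h = cnj (inner2 h d)" by (rule inner2_cnj)
  also have "\<dots> = cnj (inner2 h e)" using assms(3)[OF \<open>L2 h\<close>] by simp
  finally show "inner2 d h = inner2 e h" by (simp add: inner2_cnj[of h e])
qed

lemma Cauchy_Schwarz2:
  assumes f: "L2 f" and g: "L2 g"
  shows "cmod (inner2 f g) \<le> norm2 f * norm2 g"
proof -
  let ?a = "\<lambda>z. cmod (f z)" and ?b = "\<lambda>z. cmod (g z)"
  have mf: "f \<in> borel_measurable borel" and mg: "g \<in> borel_measurable borel" using f g L2_meas by auto
  have iab: "integrable M (\<lambda>z. ?a z * ?b z)"
    using integrable_norm[OF L2_integrable_prod[OF f g]] by (simp add: norm_mult)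
  have "cmod (inner2 f g) \<le> (LINT z|M. ?a z * ?b z)"
    unfolding inner2_def using integral_norm_bound[of M "\<lambda>z. f z * cnj (g z)"] by (simp add: norm_mult)
  moreover have "(LINT z|M. ?a z * ?b z)^2 \<le> (LINT z|M. (?a z)^2) * (LINT z|M. (?b z)^2)"
  proof -
    have "(\<integral>\<^sup>+z. ennreal (?a z) * ennreal (?b z) \<partial>M)^2 \<le>
          (\<integral>\<^sup>+z. (ennreal (?a z))^2 \<partial>M) * (\<integral>\<^sup>+z. (ennreal (?b z))^2 \<partial>M)"
      by (rule Cauchy_Schwarz_nn_integral) (use mf mg in measurable)
    moreover have "(\<integral>\<^sup>+z. ennreal (?a z) * ennreal (?b z) \<partial>M) = ennreal (LINT z|M. ?a z * ?b z)"
      using nn_integral_eq_integral[OF iab] by (simp add: ennreal_mult)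
    moreover have "(\<integral>\<^sup>+z. (ennreal (?a z))^2 \<partial>M) = ennreal (LINT z|M. (?a z)^2)"
      using nn_integral_eq_integral[OF L2_int[OF f]] by (simp add: ennreal_power)
    moreover have "(\<integral>\<^sup>+z. (ennreal (?b z))^2 \<partial>M) = ennreal (LINT z|M. (?b z)^2)"
      using nn_integral_eq_integral[OF L2_int[OF g]] by (simp add: ennreal_power)
    ultimately have "ennreal ((LINT z|M. ?a z * ?b z)^2) \<le> ennreal ((LINT z|M. (?a z)^2) * (LINT z|M. (?b z)^2))"
      by (simp add: ennreal_power ennreal_mult integral_nonneg_AE)
    then show ?thesis
      by (subst (asm) ennreal_le_iff) (auto intro!: mult_nonneg_nonneg integral_nonneg_AE)
  qed
  then have "(LINT z|M. ?a z * ?b z) \<le> norm2 f * norm2 g"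
    unfolding norm2_def by (metis real_le_rsqrt real_sqrt_mult)
  ultimately show ?thesis by linarith
qed

lemma norm2_triangle:
  assumes f: "L2 f" and g: "L2 g"
  shows "norm2 (\<lambda>z. f z + g z) \<le> norm2 f + norm2 g"
proof -
  have s: "L2 (\<lambda>z. f z + g z)" using f g L2_add by auto
  have "(norm2 (\<lambda>z. f z + g z))^2 = Re (inner2 (\<lambda>z. f z + g z) (\<lambda>z. f z + g z))"
    using inner2_self[OF s] by simp
  also have "\<dots> = Re (inner2 f f) + Re (inner2 g g) + 2 * Re (inner2 f g)"
    using f g by (simp add: inner2_add_left inner2_add_right L2_add) (subst inner2_cnj[of g f], simp)
  also have "\<dots> \<le> (norm2 f)^2 + (norm2 g)^2 + 2 * (norm2 f * norm2 g)"
    using Cauchy_Schwarz2[OF f g] complex_Re_le_cmod[of "inner2 f g"]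
    by (simp add: inner2_self f g)
  also have "\<dots> = (norm2 f + norm2 g)^2" by (simp add: power2_eq_square algebra_simps)
  finally show ?thesis
    using norm2_nonneg by (meson add_nonneg_nonneg power2_le_imp_le)
qed

lemma parallelogram:
  assumes f: "L2 f" and g: "L2 g"
  shows "(norm2 (\<lambda>z. f z + g z))^2 + (norm2 (\<lambda>z. f z - g z))^2 = 2 * (norm2 f)^2 + 2 * (norm2 g)^2"
proof -
  have s: "L2 (\<lambda>z. f z + g z)" "L2 (\<lambda>z. f z - g z)" using f g L2_add L2_minus by auto
  have "complex_of_real ((norm2 (\<lambda>z. f z + g z))^2 + (norm2 (\<lambda>z. f z - g z))^2) =
        inner2 (\<lambda>z. f z + g z) (\<lambda>z. f z + g z) + inner2 (\<lambda>z. f z - g z) (\<lambda>z. f z - g z)"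
    using inner2_self[OF s(1)] inner2_self[OF s(2)] by simp
  also have "\<dots> = 2 * inner2 f f + 2 * inner2 g g"
    using f g by (simp add: inner2_add_left inner2_add_right inner2_minus_left inner2_minus_right
        L2_add L2_minus)
  also have "\<dots> = complex_of_real (2 * (norm2 f)^2 + 2 * (norm2 g)^2)"
    using inner2_self[OF f] inner2_self[OF g] by simp
  finally show ?thesis by (simp only: of_real_eq_iff)
qed

text \<open>On a probability space the L1 norm is dominated by the L2 norm.\<close>
lemma L1_le_L2:
  assumes "L2 f"
  shows "(LINT z|M. cmod (f z)) \<le> norm2 f"
proof -
  have a: "L2 (\<lambda>z. complex_of_real (cmod (f z)))"
    using assms by (auto simp: L2_iff norm_of_real intro: borel_measurable_of_real)
  have "(LINT z|M. cmod (f z)) = cmod (inner2 (\<lambda>z. complex_of_real (cmod (f z))) (\<lambda>z. 1))"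
    unfolding inner2_def by (simp add: integral_nonneg_AE)
  also have "\<dots> \<le> norm2 (\<lambda>z. complex_of_real (cmod (f z))) * norm2 (\<lambda>z. 1)"
    by (rule Cauchy_Schwarz2[OF a]) simp
  also have "\<dots> = norm2 f" by (simp add: norm2_const norm2_def norm_of_real)
  finally show ?thesis .
qed

section \<open>Completeness of L2\<close>

lemma nn_integral_L2:
  assumes "L2 f"
  shows "(\<integral>\<^sup>+z. ennreal ((cmod (f z))^2) \<partial>M) = ennreal ((norm2 f)^2)"
  using nn_integral_eq_integral[OF L2_int[OF assms]] norm2_sq[OF assms] by simp

text \<open>Fatou's lemma: the L2 distance to an a.e. pointwise limit of a subsequence is bounded by
  the Cauchy modulus of the sequence.\<close>
lemma L2_dist_pointwise_limit:
  fixes r :: "nat \<Rightarrow> nat"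
  assumes L: "\<And>n. L2 (F n)" and r: "strict_mono r" and g: "g \<in> borel_measurable borel"
    and conv: "AE z in M. (\<lambda>i. F (r i) z) \<longlonglongrightarrow> g z"
    and Cy: "\<forall>m\<ge>N. norm2 (\<lambda>z. F n z - F m z) \<le> e"
  shows "(\<integral>\<^sup>+z. ennreal ((cmod (F n z - g z))^2) \<partial>M) \<le> ennreal (e^2)"
proof -
  have [measurable]: "F k \<in> borel_measurable borel" for k
    using L L2_meas by auto
  note g[measurable]
  have "(\<integral>\<^sup>+z. ennreal ((cmod (F n z - g z))^2) \<partial>M) =
        (\<integral>\<^sup>+z. liminf (\<lambda>i. ennreal ((cmod (F n z - F (r i) z))^2)) \<partial>M)"
  proof (intro nn_integral_cong_AE)
    show "AE z in M. ennreal ((cmod (F n z - g z))^2) = liminf (\<lambda>i. ennreal ((cmod (F n z - F (r i) z))^2))"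
      using conv
    proof eventually_elim
      case (elim z)
      have "(\<lambda>i. ennreal ((cmod (F n z - F (r i) z))^2)) \<longlonglongrightarrow> ennreal ((cmod (F n z - g z))^2)"
        by (intro tendsto_ennrealI tendsto_intros elim)
      from lim_imp_Liminf[OF trivial_limit_sequentially this] show ?case by simp
    qed
  qed
  also have "\<dots> \<le> liminf (\<lambda>i. \<integral>\<^sup>+z. ennreal ((cmod (F n z - F (r i) z))^2) \<partial>M)"
    by (rule nn_integral_liminf[of "\<lambda>i z. ennreal ((cmod (F n z - F (r i) z))^2)"]) measurable
  also have "\<dots> \<le> liminf (\<lambda>i. ennreal (e^2))"
  proof (intro Liminf_mono)
    have "eventually (\<lambda>i. r i \<ge> N) sequentially"
      using seq_suble[OF r] by (intro eventually_sequentiallyI[of N]) (meson le_trans)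
    then show "\<forall>\<^sub>F i in sequentially. (\<integral>\<^sup>+z. ennreal ((cmod (F n z - F (r i) z))^2) \<partial>M) \<le> ennreal (e^2)"
    proof eventually_elim
      case (elim i)
      have "(\<integral>\<^sup>+z. ennreal ((cmod (F n z - F (r i) z))^2) \<partial>M) = ennreal ((norm2 (\<lambda>z. F n z - F (r i) z))^2)"
        by (rule nn_integral_L2[OF L2_minus[OF L L]])
      also have "\<dots> \<le> ennreal (e^2)"
        using Cy elim norm2_nonneg by (intro ennreal_leI power_mono) simp_all
      finally show ?case .
    qed
  qed
  finally show ?thesis by (simp add: Liminf_const)
qed

text \<open>Riesz-Fischer: every norm-Cauchy sequence in L2 converges in L2.  An L1-Cauchy
  subsequence converges a.e.; its pointwise limit is the L2 limit by the previous lemma.\<close>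
lemma L2_complete:
  assumes L: "\<And>n. L2 (F n)"
    and Cy: "\<And>e. e > 0 \<Longrightarrow> \<exists>N. \<forall>m\<ge>N. \<forall>n\<ge>N. norm2 (\<lambda>z. F m z - F n z) < e"
  shows "\<exists>g. L2 g \<and> (\<lambda>n. norm2 (\<lambda>z. F n z - g z)) \<longlonglongrightarrow> 0"
proof -
  have Fm[measurable]: "F n \<in> borel_measurable borel" for n using L L2_meas by auto
  have L1_Cauchy: "\<exists>N. \<forall>i\<ge>N. \<forall>j\<ge>N. (LINT z|M. norm (F i z - F j z)) < e" if "e > 0" for e
    using Cy[OF that] L1_le_L2[OF L2_minus[OF L L]] by (meson le_less_trans)
  obtain r where r: "strict_mono r" and ae: "AE z in M. Cauchy (\<lambda>i. F (r i) z)"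
    using cauchy_L1_AE_cauchy_subseq[of M F] L1_Cauchy L2_integrable[OF L] by (auto simp: borel_M_iff)
  define g where "g = (\<lambda>z. lim (\<lambda>i. F (r i) z))"
  have gm[measurable]: "g \<in> borel_measurable borel" unfolding g_def by measurable
  have conv: "AE z in M. (\<lambda>i. F (r i) z) \<longlonglongrightarrow> g z"
    using ae by eventually_elim (simp add: g_def Cauchy_convergent_iff convergent_LIMSEQ_iff)
  have close: "\<exists>N. \<forall>n\<ge>N. L2 (\<lambda>z. F n z - g z) \<and> norm2 (\<lambda>z. F n z - g z) \<le> e" if e: "e > 0" for e
  proof -
    obtain N where N: "\<forall>m\<ge>N. \<forall>n\<ge>N. norm2 (\<lambda>z. F m z - F n z) < e" using Cy[OF e] by auto
    have "L2 (\<lambda>z. F n z - g z) \<and> norm2 (\<lambda>z. F n z - g z) \<le> e" if n: "n \<ge> N" for n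
    proof -
      have bound: "(\<integral>\<^sup>+z. ennreal ((cmod (F n z - g z))^2) \<partial>M) \<le> ennreal (e^2)"
        using N n by (intro L2_dist_pointwise_limit[OF L r gm conv]) (auto intro: less_imp_le)
      have "integrable M (\<lambda>z. (cmod (F n z - g z))^2)"
        using bound by (subst integrable_iff_bounded) (auto intro: le_less_trans)
      then have Ln: "L2 (\<lambda>z. F n z - g z)" by (simp add: L2_iff)
      have "(norm2 (\<lambda>z. F n z - g z))^2 \<le> e^2"
        using bound nn_integral_L2[OF Ln] e by simp
      then show ?thesis using Ln e by (simp add: power2_le_iff_abs_le)
    qed
    then show ?thesis by blast
  qed
  obtain N1 where "\<forall>n\<ge>N1. L2 (\<lambda>z. F n z - g z) \<and> norm2 (\<lambda>z. F n z - g z) \<le> 1"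
    using close[of 1] by auto
  then have gL: "L2 g" using L2_minus[OF L[of N1], of "\<lambda>z. F N1 z - g z"] by simp
  have "(\<lambda>n. norm2 (\<lambda>z. F n z - g z)) \<longlonglongrightarrow> 0"
  proof (rule LIMSEQ_I)
    fix e :: real assume "e > 0"
    then obtain N where "\<forall>n\<ge>N. L2 (\<lambda>z. F n z - g z) \<and> norm2 (\<lambda>z. F n z - g z) \<le> e / 2"
      using close[of "e/2"] by auto
    moreover have "e / 2 < e" using \<open>e > 0\<close> by simp
    ultimately show "\<exists>N. \<forall>n\<ge>N. norm (norm2 (\<lambda>z. F n z - g z) - 0) < e"
      using norm2_nonneg by (auto intro!: exI[of _ N] simp del: half_gt_zero_iff)
  qed
  with gL show ?thesis by auto
qed

section \<open>The Riesz representation theorem\<close>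

text \<open>Minimising sequences in a midpoint-convex set of L2 functions are Cauchy
  (by the parallelogram law).\<close>
lemma minimising_sequence_Cauchy:
  assumes K: "\<And>f. f \<in> K \<Longrightarrow> L2 f"
    and mid: "\<And>f g. f \<in> K \<Longrightarrow> g \<in> K \<Longrightarrow> (\<lambda>z. (1/2) * (f z + g z)) \<in> K"
    and d_le: "\<And>f. f \<in> K \<Longrightarrow> d \<le> norm2 f" and d0: "0 \<le> d"
    and FK: "\<And>n. F n \<in> K" and Fn: "\<And>n. norm2 (F n) < d + 1 / Suc n"
    and e: "e > 0"
  shows "\<exists>N. \<forall>m\<ge>N. \<forall>n\<ge>N. norm2 (\<lambda>z. F m z - F n z) < e"
proof -
  have FL: "L2 (F n)" for n using K FK by auto
  have diff_bound: "(norm2 (\<lambda>z. F m z - F n z))^2 \<le> 2 * (norm2 (F m))^2 + 2 * (norm2 (F n))^2 - 4 * d^2"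
    for m n
  proof -
    have "d \<le> norm2 (\<lambda>z. (1/2) * (F m z + F n z))" using d_le[OF mid[OF FK FK]] .
    also have "\<dots> = (1/2) * norm2 (\<lambda>z. F m z + F n z)" using norm2_scale[of "1/2"] by simp
    finally have "(2*d)^2 \<le> (norm2 (\<lambda>z. F m z + F n z))^2" using d0 by (intro power_mono) auto
    then show ?thesis using parallelogram[OF FL[of m] FL[of n]] by (simp add: power_mult_distrib)
  qed
  have "0 < min 1 (e^2 / (8 * d + 4))" using e d0 by auto
  from reals_Archimedean[OF this] obtain N where N: "1 / Suc N < min 1 (e^2 / (8 * d + 4))"
    by (auto simp: inverse_eq_divide)
  define \<delta> where "\<delta> = 1 / real (Suc N)"
  have \<delta>: "0 < \<delta>" "\<delta> < 1" "\<delta> < e^2 / (8 * d + 4)" using N unfolding \<delta>_def by auto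
  have close: "(norm2 (F m))^2 \<le> (d + \<delta>)^2" if "m \<ge> N" for m
  proof -
    have "1 / real (Suc m) \<le> \<delta>" using that unfolding \<delta>_def by (intro divide_left_mono) auto
    then show ?thesis using Fn[of m] norm2_nonneg by (intro power_mono) auto
  qed
  have "norm2 (\<lambda>z. F m z - F n z) < e" if "m \<ge> N" "n \<ge> N" for m n
  proof -
    have "(norm2 (\<lambda>z. F m z - F n z))^2 \<le> 4 * (d + \<delta>)^2 - 4 * d^2"
      using diff_bound[of m n] close[OF that(1)] close[OF that(2)] by linarith
    also have "\<dots> = \<delta> * (8 * d + 4 * \<delta>)" by (simp add: power2_eq_square algebra_simps)
    also have "\<dots> \<le> \<delta> * (8 * d + 4)" using \<delta> d0 by (intro mult_left_mono) auto
    also have "\<dots> < e^2" using \<delta> d0 by (simp add: pos_less_divide_eq)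
    finally show ?thesis using e norm2_nonneg by (meson power_less_imp_less_base less_le)
  qed
  then show ?thesis by blast
qed

lemma minimal_norm_element:
  assumes K: "\<And>f. f \<in> K \<Longrightarrow> L2 f" and f0: "f0 \<in> K"
    and mid: "\<And>f g. f \<in> K \<Longrightarrow> g \<in> K \<Longrightarrow> (\<lambda>z. (1/2) * (f z + g z)) \<in> K"
    and closed: "\<And>F g. (\<And>n. F n \<in> K) \<Longrightarrow> L2 g \<Longrightarrow> (\<lambda>n. norm2 (\<lambda>z. F n z - g z)) \<longlonglongrightarrow> 0 \<Longrightarrow> g \<in> K"
  shows "\<exists>g\<in>K. \<forall>f\<in>K. norm2 g \<le> norm2 f"
proof -
  define d where "d = Inf (norm2 ` K)"
  have bdd: "bdd_below (norm2 ` K)" by (rule bdd_belowI[of _ 0]) (auto simp: norm2_nonneg)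
  have d_le: "d \<le> norm2 f" if "f \<in> K" for f unfolding d_def using bdd that by (simp add: cINF_lower)
  have d0: "0 \<le> d" unfolding d_def using f0 by (intro cINF_greatest) (auto simp: norm2_nonneg)
  have "\<exists>f. f \<in> K \<and> norm2 f < d + 1 / Suc n" for n
  proof -
    have "\<exists>x\<in>norm2 ` K. x < d + 1 / Suc n"
      unfolding d_def by (intro cInf_lessD) (use f0 in auto)
    then show ?thesis by auto
  qed
  then obtain F where FK: "\<And>n. F n \<in> K" and Fn: "\<And>n. norm2 (F n) < d + 1 / Suc n" by metis
  have FL: "L2 (F n)" for n using K FK by auto
  obtain g where g: "L2 g" and lim: "(\<lambda>n. norm2 (\<lambda>z. F n z - g z)) \<longlonglongrightarrow> 0"
    using L2_complete[OF FL minimising_sequence_Cauchy[OF K mid d_le d0 FK Fn]] by blast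
  have "norm2 g \<le> d + 1 / Suc n + norm2 (\<lambda>z. F n z - g z)" for n
  proof -
    have "norm2 g = norm2 (\<lambda>z. F n z + (- 1) * (F n z - g z))" by simp
    also have "\<dots> \<le> norm2 (F n) + norm2 (\<lambda>z. (- 1) * (F n z - g z))"
      by (rule norm2_triangle) (auto intro: FL L2_scale L2_minus g)
    also have "\<dots> = norm2 (F n) + norm2 (\<lambda>z. F n z - g z)"
      using norm2_scale[of "-1" "\<lambda>z. F n z - g z"] by simp
    finally show ?thesis using Fn[of n] by linarith
  qed
  moreover have "(\<lambda>n. d + 1 / Suc n + norm2 (\<lambda>z. F n z - g z)) \<longlonglongrightarrow> d + 0 + 0"
    by (intro tendsto_intros lim LIMSEQ_Suc[OF lim_inverse_n'])
  ultimately have "norm2 g \<le> d" by (intro LIMSEQ_le_const) auto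
  then show ?thesis using closed[OF FK g lim] d_le by force
qed

lemma minimal_norm_orthogonal:
  assumes g: "L2 g" and h: "L2 h" and min: "\<And>s. norm2 g \<le> norm2 (\<lambda>z. g z - s * h z)"
  shows "inner2 h g = 0"
proof -
  define a where "a = inner2 h g"
  have bound: "2 * (cmod a)^2 \<le> t * ((cmod a)^2 * (norm2 h)^2)" if t: "t > 0" for t :: real
  proof -
    define s where "s = complex_of_real t * cnj a"
    have fs: "L2 (\<lambda>z. g z - s * h z)" using g h L2_minus L2_scale by auto
    have le: "(norm2 g)^2 \<le> (norm2 (\<lambda>z. g z - s * h z))^2"
      using min norm2_nonneg[of g] by (intro power_mono) auto
    have "complex_of_real ((norm2 (\<lambda>z. g z - s * h z))^2) = inner2 (\<lambda>z. g z - s * h z) (\<lambda>z. g z - s * h z)"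
      using inner2_self[OF fs] by simp
    also have "\<dots> = inner2 g g - cnj s * inner2 g h - s * inner2 h g + s * cnj s * inner2 h h"
      using g h fs L2_scale[OF h, of s]
      by (simp add: inner2_minus_left inner2_minus_right inner2_scale_left inner2_scale_right
          L2_scale algebra_simps)
    also have "\<dots> = complex_of_real ((norm2 g)^2 - 2 * t * (cmod a)^2 + t^2 * (cmod a)^2 * (norm2 h)^2)"
      using inner2_self[OF g] inner2_self[OF h] inner2_cnj[of g h]
        cmod_power2[of a, unfolded power2_eq_square]
      by (simp add: s_def a_def[symmetric] cmod_power2 complex_eq_iff algebra_simps power2_eq_square)
    finally have "(norm2 (\<lambda>z. g z - s * h z))^2 = (norm2 g)^2 - 2 * t * (cmod a)^2 + t^2 * (cmod a)^2 * (norm2 h)^2"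
      by (simp only: of_real_eq_iff)
    with le have "t * (2 * (cmod a)^2) \<le> t * (t * ((cmod a)^2 * (norm2 h)^2))"
      by (simp add: power2_eq_square algebra_simps)
    then show ?thesis using t by simp
  qed
  have "(\<lambda>n. (1 / Suc n) * ((cmod a)^2 * (norm2 h)^2)) \<longlonglongrightarrow> 0 * ((cmod a)^2 * (norm2 h)^2)"
    by (intro tendsto_intros LIMSEQ_Suc[OF lim_inverse_n'])
  moreover have "2 * (cmod a)^2 \<le> (1 / Suc n) * ((cmod a)^2 * (norm2 h)^2)" for n
    by (rule bound) simp
  ultimately have "2 * (cmod a)^2 \<le> 0 * ((cmod a)^2 * (norm2 h)^2)"
    by (intro LIMSEQ_le_const) blast+
  then show ?thesis by (simp add: a_def)
qed

definition bounded_functional :: "((complex \<Rightarrow> complex) \<Rightarrow> complex) \<Rightarrow> bool" where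
  "bounded_functional l \<longleftrightarrow> (\<forall>f g. L2 f \<longrightarrow> L2 g \<longrightarrow> ae_eq f g \<longrightarrow> l f = l g) \<and>
     (\<forall>f g c. L2 f \<longrightarrow> L2 g \<longrightarrow> l (\<lambda>z. c * f z + g z) = c * l f + l g) \<and>
     (\<exists>C. \<forall>f. L2 f \<longrightarrow> cmod (l f) \<le> C * norm2 f)"

lemma bounded_functional_ae:
  "bounded_functional l \<Longrightarrow> L2 f \<Longrightarrow> L2 g \<Longrightarrow> ae_eq f g \<Longrightarrow> l f = l g"
  unfolding bounded_functional_def by blast

lemma bounded_functional_linear:
  "bounded_functional l \<Longrightarrow> L2 f \<Longrightarrow> L2 g \<Longrightarrow> l (\<lambda>z. c * f z + g z) = c * l f + l g"
  unfolding bounded_functional_def by blast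

lemma bounded_functional_scale: "bounded_functional l \<Longrightarrow> L2 f \<Longrightarrow> l (\<lambda>z. c * f z) = c * l f"
  using bounded_functional_linear[of l f "\<lambda>z. 0" c] bounded_functional_linear[of l "\<lambda>z. 0" "\<lambda>z. 0" 1]
  by simp

lemma bounded_functional_minus:
  "bounded_functional l \<Longrightarrow> L2 f \<Longrightarrow> L2 g \<Longrightarrow> l (\<lambda>z. f z - g z) = l f - l g"
  using bounded_functional_linear[of l g f "-1"] by simp

lemma bounded_functional_continuous:
  assumes l: "bounded_functional l" and F: "\<And>n. L2 (F n)" and g: "L2 g"
    and lim: "(\<lambda>n. norm2 (\<lambda>z. F n z - g z)) \<longlonglongrightarrow> 0"
  shows "(\<lambda>n. l (F n)) \<longlonglongrightarrow> l g"
proof -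
  obtain C where C: "\<And>f. L2 f \<Longrightarrow> cmod (l f) \<le> C * norm2 f"
    using l unfolding bounded_functional_def by blast
  have "norm (l (F n) - l g) \<le> C * norm2 (\<lambda>z. F n z - g z)" for n
    using C[OF L2_minus[OF F g]] bounded_functional_minus[OF l F g] by simp
  then have "eventually (\<lambda>n. norm (l (F n) - l g) \<le> C * norm2 (\<lambda>z. F n z - g z)) sequentially"
    by (intro always_eventually allI)
  moreover have "(\<lambda>n. C * norm2 (\<lambda>z. F n z - g z)) \<longlonglongrightarrow> 0"
    using tendsto_mult_right_zero[OF lim] by simp
  ultimately have "(\<lambda>n. l (F n) - l g) \<longlonglongrightarrow> 0" by (rule Lim_null_comparison)
  then show ?thesis by (simp add: LIM_zero_iff)
qed

lemma representer_from_orthogonal: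
  assumes l: "bounded_functional l" and g0: "L2 g0" "l g0 = 1"
    and orth: "\<And>h. L2 h \<Longrightarrow> l h = 0 \<Longrightarrow> inner2 h g0 = 0" and f: "L2 f"
  shows "l f = inner2 f (\<lambda>z. complex_of_real (1 / (norm2 g0)^2) * g0 z)"
proof -
  have n0: "norm2 g0 \<noteq> 0"
  proof
    assume "norm2 g0 = 0"
    then have "ae_eq g0 (\<lambda>z. 0)" using norm2_eq_0[OF g0(1)] by simp
    then have "l g0 = l (\<lambda>z. 0)" using bounded_functional_ae[OF l g0(1)] by simp
    then show False using g0(2) bounded_functional_scale[OF l g0(1), of 0] by simp
  qed
  have "l (\<lambda>z. f z - l f * g0 z) = 0"
    using bounded_functional_minus[OF l f L2_scale[OF g0(1)]] bounded_functional_scale[OF l g0(1)] g0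
    by simp
  then have "inner2 (\<lambda>z. f z - l f * g0 z) g0 = 0" using orth f g0 L2_minus L2_scale by blast
  then have "inner2 f g0 = l f * complex_of_real ((norm2 g0)^2)"
    using f g0 by (simp add: inner2_minus_left inner2_scale_left L2_scale inner2_self)
  moreover have "inner2 f (\<lambda>z. complex_of_real (1 / (norm2 g0)^2) * g0 z) =
      cnj (complex_of_real (1 / (norm2 g0)^2)) * inner2 f g0"
    by (rule inner2_scale_right[OF g0(1) f])
  ultimately show ?thesis using n0 by (simp add: field_simps)
qed

text \<open>Riesz: the affine hyperplane l = 1 is midpoint-convex and closed, so it has a vector
  of least norm; that vector is orthogonal to the kernel of l and hence represents l.\<close>
theorem riesz_representation:
  assumes l: "bounded_functional l"
  shows "\<exists>g. L2 g \<and> (\<forall>f. L2 f \<longrightarrow> l f = inner2 f g)"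
proof (cases "\<forall>f. L2 f \<longrightarrow> l f = 0")
  case True
  then show ?thesis by (intro exI[of _ "\<lambda>z. 0"]) (simp add: inner2_def)
next
  case False
  then obtain f1 where f1: "L2 f1" "l f1 \<noteq> 0" by auto
  define K where "K = {f. L2 f \<and> l f = 1}"
  have "\<exists>g0\<in>K. \<forall>f\<in>K. norm2 g0 \<le> norm2 f"
  proof (rule minimal_norm_element)
    have "l (\<lambda>z. (1 / l f1) * f1 z) = 1"
      using bounded_functional_scale[OF l f1(1), of "1 / l f1"] f1(2) by simp
    then show "(\<lambda>z. (1 / l f1) * f1 z) \<in> K" unfolding K_def using L2_scale[OF f1(1)] by blast
    show "(\<lambda>z. (1/2) * (f z + g z)) \<in> K" if "f \<in> K" "g \<in> K" for f g
    proof -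
      have fg: "L2 f" "L2 g" "l f = 1" "l g = 1" using that by (auto simp: K_def)
      have "l (\<lambda>z. (1/2) * (f z + g z)) = (1/2) * l (\<lambda>z. f z + g z)"
        using bounded_functional_scale[OF l L2_add[OF fg(1,2)]] .
      also have "\<dots> = 1" using bounded_functional_linear[OF l fg(1,2), of 1] fg(3,4) by simp
      finally show ?thesis unfolding K_def using L2_scale[OF L2_add[OF fg(1,2)]] by blast
    qed
    show "g \<in> K" if FK: "\<And>n. F n \<in> K" and g: "L2 g"
      and lim: "(\<lambda>n. norm2 (\<lambda>z. F n z - g z)) \<longlonglongrightarrow> 0" for F g
    proof -
      have "(\<lambda>n. l (F n)) \<longlonglongrightarrow> l g"
        using FK g lim by (intro bounded_functional_continuous[OF l]) (auto simp: K_def)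
      moreover have "(\<lambda>n. l (F n)) = (\<lambda>n. 1)" using FK by (auto simp: K_def)
      ultimately have "(\<lambda>n. 1) \<longlonglongrightarrow> l g" by simp
      then have "l g = 1" by (simp add: LIMSEQ_const_iff)
      then show ?thesis using g by (simp add: K_def)
    qed
  qed (auto simp: K_def)
  then obtain g0 where g0: "L2 g0" "l g0 = 1" and min: "\<And>f. L2 f \<Longrightarrow> l f = 1 \<Longrightarrow> norm2 g0 \<le> norm2 f"
    unfolding K_def by blast
  have orth: "inner2 h g0 = 0" if h: "L2 h" "l h = 0" for h
  proof (rule minimal_norm_orthogonal[OF g0(1) h(1)])
    fix s
    have "l (\<lambda>z. g0 z - s * h z) = 1"
      using bounded_functional_minus[OF l g0(1) L2_scale[OF h(1)]] bounded_functional_scale[OF l h(1)]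
        g0(2) h(2) by simp
    then show "norm2 g0 \<le> norm2 (\<lambda>z. g0 z - s * h z)"
      using min L2_minus[OF g0(1) L2_scale[OF h(1)]] by blast
  qed
  then show ?thesis using representer_from_orthogonal[OF l g0] L2_scale[OF g0(1)] by blast
qed

lemma bounded_op_L2: "bounded_op T \<Longrightarrow> L2 f \<Longrightarrow> L2 (T f)"
  unfolding bounded_op_def by blast

lemma bounded_op_ae: "bounded_op T \<Longrightarrow> L2 f \<Longrightarrow> L2 g \<Longrightarrow> ae_eq f g \<Longrightarrow> ae_eq (T f) (T g)"
  unfolding bounded_op_def by blast

lemma bounded_op_linear:
  "bounded_op T \<Longrightarrow> L2 f \<Longrightarrow> L2 g \<Longrightarrow> ae_eq (T (\<lambda>z. c * f z + g z)) (\<lambda>z. c * T f z + T g z)"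
  unfolding bounded_op_def by blast

lemma bounded_op_bound: "bounded_op T \<Longrightarrow> \<exists>C. \<forall>f. L2 f \<longrightarrow> norm2 (T f) \<le> C * norm2 f"
  unfolding bounded_op_def by blast

lemma bounded_op_zero: "bounded_op T \<Longrightarrow> ae_eq (T (\<lambda>z. 0)) (\<lambda>z. 0)"
  using bounded_op_linear[of T "\<lambda>z. 0" "\<lambda>z. 0" 1] by (simp add: ae_eq_def)

lemma bounded_op_scale: "bounded_op T \<Longrightarrow> L2 f \<Longrightarrow> ae_eq (T (\<lambda>z. c * f z)) (\<lambda>z. c * T f z)"
  using bounded_op_linear[of T f "\<lambda>z. 0" c] bounded_op_zero[of T] by (auto simp: ae_eq_def elim: AE_mp)

lemma bounded_op_sum:
  assumes T: "bounded_op T" and F: "\<And>i. i \<in> I \<Longrightarrow> L2 (F i)"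
  shows "ae_eq (T (\<lambda>z. \<Sum>i\<in>I. F i z)) (\<lambda>z. \<Sum>i\<in>I. T (F i) z)"
  using F
proof (induction I rule: infinite_finite_induct)
  case (insert x I)
  have "ae_eq (T (\<lambda>z. F x z + (\<Sum>i\<in>I. F i z))) (\<lambda>z. T (F x) z + T (\<lambda>z. \<Sum>i\<in>I. F i z) z)"
    using bounded_op_linear[OF T, of "F x" "\<lambda>z. \<Sum>i\<in>I. F i z" 1] insert.prems
    by (simp add: L2_sum)
  also have "ae_eq \<dots> (\<lambda>z. T (F x) z + (\<Sum>i\<in>I. T (F i) z))"
    using insert.IH insert.prems by (auto simp: ae_eq_def elim: AE_mp)
  finally show ?case using insert.hyps by simp
qed (use bounded_op_zero[OF T] in simp_all)

lemma bounded_op_comp: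
  assumes A: "bounded_op A" and B: "bounded_op B"
  shows "bounded_op (\<lambda>f. A (B f))"
  unfolding bounded_op_def
proof (intro conjI allI impI)
  fix f assume "L2 f" then show "L2 (A (B f))" using bounded_op_L2[OF A] bounded_op_L2[OF B] by blast
next
  fix f g assume "L2 f" "L2 g" "ae_eq f g"
  then show "ae_eq (A (B f)) (A (B g))"
    using bounded_op_ae[OF A] bounded_op_ae[OF B] bounded_op_L2[OF B] by blast
next
  fix f g c assume f: "L2 f" "L2 g"
  have Bf: "L2 (B f)" "L2 (B g)" using bounded_op_L2[OF B] f by blast+
  have "ae_eq (A (B (\<lambda>z. c * f z + g z))) (A (\<lambda>z. c * B f z + B g z))"
    using bounded_op_linear[OF B f] bounded_op_L2[OF B L2_add_scale[OF f]] L2_add_scale[OF Bf]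
    by (rule bounded_op_ae[OF A, rotated 2])
  also have "ae_eq \<dots> (\<lambda>z. c * A (B f) z + A (B g) z)"
    using bounded_op_linear[OF A Bf] .
  finally show "ae_eq (A (B (\<lambda>z. c * f z + g z))) (\<lambda>z. c * A (B f) z + A (B g) z)" .
next
  obtain CA where CA: "\<And>f. L2 f \<Longrightarrow> norm2 (A f) \<le> CA * norm2 f" using bounded_op_bound[OF A] by blast
  obtain CB where CB: "\<And>f. L2 f \<Longrightarrow> norm2 (B f) \<le> CB * norm2 f" using bounded_op_bound[OF B] by blast
  have "norm2 (A (B f)) \<le> \<bar>CA\<bar> * \<bar>CB\<bar> * norm2 f" if f: "L2 f" for f
  proof -
    have "norm2 (A (B f)) \<le> CA * norm2 (B f)" by (rule CA[OF bounded_op_L2[OF B f]])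
    also have "\<dots> \<le> \<bar>CA\<bar> * norm2 (B f)" by (intro mult_right_mono) (auto simp: norm2_nonneg)
    also have "\<dots> \<le> \<bar>CA\<bar> * (\<bar>CB\<bar> * norm2 f)"
    proof (intro mult_left_mono)
      have "CB * norm2 f \<le> \<bar>CB\<bar> * norm2 f" by (intro mult_right_mono) (auto simp: norm2_nonneg)
      then show "norm2 (B f) \<le> \<bar>CB\<bar> * norm2 f" using CB[OF f] by linarith
    qed auto
    finally show ?thesis by (simp add: algebra_simps)
  qed
  then show "\<exists>C. \<forall>f. L2 f \<longrightarrow> norm2 (A (B f)) \<le> C * norm2 f" by blast
qed

lemma bounded_functional_inner_op:
  assumes T: "bounded_op T" and g: "L2 g"
  shows "bounded_functional (\<lambda>f. inner2 (T f) g)"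
  unfolding bounded_functional_def
proof (intro conjI allI impI)
  fix f f' assume "L2 f" "L2 f'" "ae_eq f f'"
  then show "inner2 (T f) g = inner2 (T f') g"
    using bounded_op_ae[OF T] bounded_op_L2[OF T] g by (intro inner2_ae_left) auto
next
  fix f f' c assume f: "L2 f" "L2 f'"
  have "inner2 (T (\<lambda>z. c * f z + f' z)) g = inner2 (\<lambda>z. c * T f z + T f' z) g"
    using f bounded_op_linear[OF T f] g bounded_op_L2[OF T]
    by (intro inner2_ae_left) (auto intro!: L2_add_scale)
  also have "\<dots> = c * inner2 (T f) g + inner2 (T f') g"
    using f g bounded_op_L2[OF T] by (intro inner2_add_scale_left) auto
  finally show "inner2 (T (\<lambda>z. c * f z + f' z)) g = c * inner2 (T f) g + inner2 (T f') g" .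
next
  obtain C where C: "\<And>f. L2 f \<Longrightarrow> norm2 (T f) \<le> C * norm2 f" using bounded_op_bound[OF T] by blast
  have "cmod (inner2 (T f) g) \<le> \<bar>C\<bar> * norm2 g * norm2 f" if f: "L2 f" for f
  proof -
    have "cmod (inner2 (T f) g) \<le> norm2 (T f) * norm2 g"
      by (rule Cauchy_Schwarz2[OF bounded_op_L2[OF T f] g])
    also have "\<dots> \<le> (\<bar>C\<bar> * norm2 f) * norm2 g"
      using C[OF f] norm2_nonneg[of g] norm2_nonneg[of f]
      by (intro mult_right_mono) (auto intro: order_trans abs_ge_self mult_right_mono)
    finally show ?thesis by (simp add: algebra_simps)
  qed
  then show "\<exists>C. \<forall>f. L2 f \<longrightarrow> cmod (inner2 (T f) g) \<le> C * norm2 f" by blast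
qed

text \<open>A formal adjoint inherits the norm bound: ||T' g||^2 = <T T' g, g> <= C ||T' g|| ||g||.\<close>
lemma formal_adjoint_norm_bound:
  assumes T: "bounded_op T" and T'L2: "\<And>g. L2 g \<Longrightarrow> L2 (T' g)"
    and T': "\<And>f g. L2 f \<Longrightarrow> L2 g \<Longrightarrow> inner2 (T f) g = inner2 f (T' g)"
    and C: "\<And>f. L2 f \<Longrightarrow> norm2 (T f) \<le> C * norm2 f" and g: "L2 g"
  shows "norm2 (T' g) \<le> C * norm2 g"
proof -
  have k: "L2 (T' g)" using T'L2 g by auto
  have "(norm2 (T' g))^2 = cmod (inner2 (T' g) (T' g))"
    using inner2_self[OF k] by (simp only: norm_of_real abs_power2)
  also have "inner2 (T' g) (T' g) = cnj (inner2 (T (T' g)) g)"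
    using T'[OF k g] inner2_cnj by metis
  also have "cmod (cnj (inner2 (T (T' g)) g)) \<le> norm2 (T (T' g)) * norm2 g"
    using Cauchy_Schwarz2[OF bounded_op_L2[OF T k] g] by simp
  also have "\<dots> \<le> (C * norm2 (T' g)) * norm2 g"
    using C[OF k] norm2_nonneg[of g] by (intro mult_right_mono) auto
  finally have *: "norm2 (T' g) * norm2 (T' g) \<le> norm2 (T' g) * (C * norm2 g)"
    by (simp add: power2_eq_square algebra_simps)
  show ?thesis
  proof (cases "norm2 (T' g) = 0")
    case True
    then show ?thesis using C[OF g] norm2_nonneg[of "T g"] by simp
  next
    case False
    then show ?thesis using * norm2_nonneg[of "T' g"] by (simp add: mult_le_cancel_left_pos)
  qed
qed

lemma formal_adjoint_bounded:
  assumes T: "bounded_op T" and T'L2: "\<And>g. L2 g \<Longrightarrow> L2 (T' g)"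
    and T': "\<And>f g. L2 f \<Longrightarrow> L2 g \<Longrightarrow> inner2 (T f) g = inner2 f (T' g)"
  shows "bounded_op T'"
  unfolding bounded_op_def
proof (intro conjI allI impI)
  fix g assume "L2 g" then show "L2 (T' g)" by (rule T'L2)
next
  fix g g' assume g: "L2 g" "L2 g'" "ae_eq g g'"
  show "ae_eq (T' g) (T' g')"
  proof (rule ae_eq_if_inner2_right)
    fix h assume h: "L2 h"
    have "inner2 h (T' g) = inner2 (T h) g" using T' g h by simp
    also have "\<dots> = inner2 (T h) g'" using g h bounded_op_L2[OF T] by (intro inner2_ae_right) auto
    finally show "inner2 h (T' g) = inner2 h (T' g')" using T' g h by simp
  qed (use T'L2 g in auto)
next
  fix g g' c assume g: "L2 g" "L2 g'"
  have s: "L2 (\<lambda>z. c * g z + g' z)" using g L2_add_scale by auto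
  show "ae_eq (T' (\<lambda>z. c * g z + g' z)) (\<lambda>z. c * T' g z + T' g' z)"
  proof (rule ae_eq_if_inner2_right)
    fix h assume h: "L2 h"
    have "inner2 h (T' (\<lambda>z. c * g z + g' z)) = inner2 (T h) (\<lambda>z. c * g z + g' z)" using T' s h by simp
    also have "\<dots> = cnj c * inner2 (T h) g + inner2 (T h) g'"
      using g h bounded_op_L2[OF T] by (intro inner2_add_scale_right) auto
    also have "\<dots> = inner2 h (\<lambda>z. c * T' g z + T' g' z)"
      using T' T'L2 g h by (simp add: inner2_add_scale_right)
    finally show "inner2 h (T' (\<lambda>z. c * g z + g' z)) = inner2 h (\<lambda>z. c * T' g z + T' g' z)" .
  qed (use T'L2 g s in \<open>auto intro: L2_add_scale\<close>)
next
  obtain C where "\<And>f. L2 f \<Longrightarrow> norm2 (T f) \<le> C * norm2 f" using bounded_op_bound[OF T] by blast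
  then show "\<exists>C. \<forall>f. L2 f \<longrightarrow> norm2 (T' f) \<le> C * norm2 f"
    using formal_adjoint_norm_bound[OF T T'L2 T'] by blast
qed

text \<open>Every bounded operator has a bounded adjoint, obtained pointwise from Riesz.\<close>
lemma adjoint_exists:
  assumes T: "bounded_op T"
  shows "\<exists>T'. bounded_op T' \<and> (\<forall>f g. L2 f \<longrightarrow> L2 g \<longrightarrow> inner2 (T f) g = inner2 f (T' g))"
proof -
  have "\<forall>g. \<exists>k. L2 g \<longrightarrow> L2 k \<and> (\<forall>f. L2 f \<longrightarrow> inner2 (T f) g = inner2 f k)"
    using riesz_representation[OF bounded_functional_inner_op[OF T]] by blast
  from choice[OF this] obtain T'
    where T': "\<forall>g. L2 g \<longrightarrow> L2 (T' g) \<and> (\<forall>f. L2 f \<longrightarrow> inner2 (T f) g = inner2 f (T' g))"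
    by blast
  then have "bounded_op T'" by (intro formal_adjoint_bounded[OF T]) auto
  then show ?thesis using T' by blast
qed

lemma adj_bounded_op: "bounded_op T \<Longrightarrow> bounded_op (adj T)"
  and adj_inner: "bounded_op T \<Longrightarrow> L2 f \<Longrightarrow> L2 g \<Longrightarrow> inner2 (T f) g = inner2 f (adj T g)"
  using someI_ex[OF adjoint_exists] unfolding adj_def by blast+

lemma adj_inner': "bounded_op T \<Longrightarrow> L2 f \<Longrightarrow> L2 g \<Longrightarrow> inner2 (adj T g) f = inner2 g (T f)"
  using adj_inner[of T f g] inner2_cnj by metis

text \<open>The orthogonal projection onto the constant functions.\<close>
definition mean_proj :: op where "mean_proj = (\<lambda>f z. inner2 f (\<lambda>z. 1))"

lemma mean_proj_bounded: "bounded_op mean_proj"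
  unfolding bounded_op_def mean_proj_def
proof (intro conjI allI impI)
  fix f g assume "L2 f" "L2 g" "ae_eq f g"
  then show "ae_eq (\<lambda>z. inner2 f (\<lambda>z. 1)) (\<lambda>z. inner2 g (\<lambda>z. 1))"
    using inner2_ae_left[of f g "\<lambda>z. 1"] by simp
next
  fix f g c assume "L2 f" "L2 g"
  then show "ae_eq (\<lambda>z. inner2 (\<lambda>z. c * f z + g z) (\<lambda>z. 1)) (\<lambda>z. c * inner2 f (\<lambda>z. 1) + inner2 g (\<lambda>z. 1))"
    using inner2_add_scale_left[of f g "\<lambda>z. 1" c] by simp
next
  have "norm2 (\<lambda>z. inner2 f (\<lambda>z. 1)) \<le> 1 * norm2 f" if f: "L2 f" for f
    using Cauchy_Schwarz2[OF f L2_const[of 1]] by (simp add: norm2_const)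
  then show "\<exists>C. \<forall>f. L2 f \<longrightarrow> norm2 (\<lambda>z. inner2 f (\<lambda>z. 1)) \<le> C * norm2 f" by blast
qed simp

lemma mean_proj_one: "mean_proj (\<lambda>z. 1) = (\<lambda>z. 1)"
  unfolding mean_proj_def using inner2_self[of "\<lambda>z. 1"] by (simp add: norm2_const)

section \<open>L-infinity acting by multiplication is maximal abelian\<close>

lemma mult_op_bounded:
  assumes "Linf \<phi>"
  shows "bounded_op (mult_op \<phi>)"
  unfolding bounded_op_def mult_op_def
proof (intro conjI allI impI)
  fix f assume "L2 f" then show "L2 (\<lambda>z. \<phi> z * f z)" using L2_mult_Linf assms by blast
next
  fix f g assume "ae_eq f g" then show "ae_eq (\<lambda>z. \<phi> z * f z) (\<lambda>z. \<phi> z * g z)" by (rule ae_eq_mult)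
next
  fix f g c show "ae_eq (\<lambda>z. \<phi> z * (c * f z + g z)) (\<lambda>z. c * (\<phi> z * f z) + \<phi> z * g z)"
    by (simp add: algebra_simps)
next
  obtain C where C: "C \<ge> 0" "AE z in M. cmod (\<phi> z) \<le> C" using Linf_bound[OF assms] by blast
  have "norm2 (\<lambda>z. \<phi> z * f z) \<le> C * norm2 f" if f: "L2 f" for f
  proof -
    have "(norm2 (\<lambda>z. \<phi> z * f z))^2 \<le> (C * norm2 f)^2"
      using L2_mult_Linf_bound[OF f C(2) Linf_meas[OF assms]] norm2_sq[OF f] norm2_sq[OF L2_mult_Linf[OF assms f]]
      by (simp add: power_mult_distrib)
    then show ?thesis using C(1) norm2_nonneg[of f] by (meson mult_nonneg_nonneg power2_le_imp_le)
  qed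
  then show "\<exists>C. \<forall>f. L2 f \<longrightarrow> norm2 (\<lambda>z. \<phi> z * f z) \<le> C * norm2 f" by blast
qed

lemma Linf_ae:
  assumes "Linf \<phi>" "\<psi> \<in> borel_measurable borel" "ae_eq \<phi> \<psi>"
  shows "Linf \<psi>"
proof -
  obtain C where "AE z in M. cmod (\<phi> z) \<le> C" using assms(1) Linf_def by blast
  then have "AE z in M. cmod (\<psi> z) \<le> C" using assms(3) unfolding ae_eq_def by eventually_elim simp
  then show ?thesis using assms(2) unfolding Linf_def by (auto simp: borel_M_iff)
qed

text \<open>L-infinity is dense in L2: a vector orthogonal to all bounded functions vanishes.
  Test against the truncations of d itself.\<close>
lemma orthogonal_to_Linf:
  assumes d: "L2 d" and H: "\<And>\<psi>. Linf \<psi> \<Longrightarrow> inner2 d \<psi> = 0"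
  shows "ae_eq d (\<lambda>z. 0)"
proof -
  have dm[measurable]: "d \<in> borel_measurable borel" using L2_meas[OF d] .
  have truncated: "AE z in M. cmod (d z) \<le> real n \<longrightarrow> d z = 0" for n :: nat
  proof -
    define \<psi> where "\<psi> = (\<lambda>z. if cmod (d z) \<le> real n then d z else 0)"
    have \<psi>m[measurable]: "\<psi> \<in> borel_measurable borel" unfolding \<psi>_def by measurable
    have "Linf \<psi>" unfolding Linf_def
      by (intro conjI exI[of _ "real n"]) (auto simp: \<psi>_def borel_M_iff)
    then have "inner2 d \<psi> = 0" by (rule H)
    moreover have "d z * cnj (\<psi> z) = complex_of_real (if cmod (d z) \<le> real n then (cmod (d z))^2 else 0)" for z
      using complex_norm_square[of "d z"] by (simp add: \<psi>_def)
    ultimately have "complex_of_real (LINT z|M. (if cmod (d z) \<le> real n then (cmod (d z))^2 else 0)) = 0"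
      unfolding inner2_def by (simp only: Bochner_Integration.integral_complex_of_real)
    then have "(LINT z|M. (if cmod (d z) \<le> real n then (cmod (d z))^2 else 0)) = 0" by simp
    moreover have "integrable M (\<lambda>z. if cmod (d z) \<le> real n then (cmod (d z))^2 else 0)"
      by (rule Bochner_Integration.integrable_bound[OF L2_int[OF d]]) auto
    ultimately have "AE z in M. (if cmod (d z) \<le> real n then (cmod (d z))^2 else 0) = 0"
      by (subst (asm) integral_nonneg_eq_0_iff_AE) auto
    then show ?thesis by eventually_elim (auto split: if_splits)
  qed
  have "AE z in M. \<forall>n::nat. cmod (d z) \<le> real n \<longrightarrow> d z = 0"
    unfolding AE_all_countable using truncated by blast
  then show ?thesis unfolding ae_eq_def
  proof eventually_elim
    case (elim z)
    obtain n :: nat where "cmod (d z) \<le> real n" using real_arch_simple by blast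
    then show ?case using elim by blast
  qed
qed

lemma ae_bound_from_level_set:
  assumes g: "L2 g" and C: "C \<ge> 0"
    and le: "(LINT z|M. (if C < cmod (g z) then (cmod (g z))^2 else 0)) \<le> (LINT z|M. (if C < cmod (g z) then C^2 else 0))"
  shows "AE z in M. cmod (g z) \<le> C"
proof -
  have gm[measurable]: "g \<in> borel_measurable borel" using L2_meas[OF g] .
  define h where "h = (\<lambda>z. if C < cmod (g z) then (cmod (g z))^2 - C^2 else 0)"
  have h_split: "h z = (if C < cmod (g z) then (cmod (g z))^2 else 0) - (if C < cmod (g z) then C^2 else 0)" for z
    by (simp add: h_def)
  have int1: "integrable M (\<lambda>z. if C < cmod (g z) then (cmod (g z))^2 else 0)"
    by (rule Bochner_Integration.integrable_bound[OF L2_int[OF g]]) auto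
  have int2: "integrable M (\<lambda>z. if C < cmod (g z) then C^2 else 0)"
    by (rule Bochner_Integration.integrable_bound[of _ "\<lambda>z. C^2"]) auto
  have ih: "integrable M h" unfolding h_split[abs_def] using int1 int2 by auto
  have h0: "0 \<le> h z" for z unfolding h_def using C by (auto intro!: power_mono)
  have "(LINT z|M. h z) \<le> 0" unfolding h_split[abs_def] using int1 int2 le by simp
  then have "(LINT z|M. h z) = 0" using integral_nonneg_AE[of h M] h0 by (simp add: order_antisym)
  then have "AE z in M. h z = 0" using ih h0 by (subst (asm) integral_nonneg_eq_0_iff_AE) auto
  then show ?thesis
  proof eventually_elim
    case (elim z)
    show ?case
    proof (rule ccontr)
      assume "\<not> cmod (g z) \<le> C"
      then have "C^2 < (cmod (g z))^2" using C by (intro power_strict_mono) auto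
      then show False using elim \<open>\<not> cmod (g z) \<le> C\<close> by (simp add: h_def)
    qed
  qed
qed

definition commutes_Linf :: "op \<Rightarrow> bool" where
  "commutes_Linf X \<longleftrightarrow> (\<forall>\<phi> f. Linf \<phi> \<longrightarrow> L2 f \<longrightarrow> ae_eq (X (\<lambda>z. \<phi> z * f z)) (\<lambda>z. \<phi> z * X f z))"

lemma commutes_Linf_on_Linf:
  assumes "commutes_Linf X" "Linf \<phi>"
  shows "ae_eq (X \<phi>) (\<lambda>z. \<phi> z * X (\<lambda>z. 1) z)"
proof -
  have "ae_eq (X (\<lambda>z. \<phi> z * 1)) (\<lambda>z. \<phi> z * X (\<lambda>z. 1) z)"
    using assms L2_const unfolding commutes_Linf_def by blast
  then show ?thesis by simp
qed

text \<open>The symbol X 1 of a bounded operator commuting with L-infinity is essentially bounded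
  by the operator norm: test X against the indicator of the level set above that norm.\<close>
lemma commutes_Linf_symbol_Linf:
  assumes X: "bounded_op X" and cX: "commutes_Linf X"
  shows "Linf (X (\<lambda>z. 1))"
proof -
  define g where "g = X (\<lambda>z. 1)"
  have gL: "L2 g" unfolding g_def by (rule bounded_op_L2[OF X]) simp
  have gm[measurable]: "g \<in> borel_measurable borel" using L2_meas[OF gL] .
  obtain C0 where C0: "\<And>f. L2 f \<Longrightarrow> norm2 (X f) \<le> C0 * norm2 f" using bounded_op_bound[OF X] by blast
  define C where "C = max C0 0"
  have C: "\<And>f. L2 f \<Longrightarrow> norm2 (X f) \<le> C * norm2 f" "C \<ge> 0"
  proof -
    fix f assume f: "L2 f"
    have "C0 * norm2 f \<le> C * norm2 f" unfolding C_def using norm2_nonneg[of f] by (intro mult_right_mono) auto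
    then show "norm2 (X f) \<le> C * norm2 f" using C0[OF f] by linarith
  qed (simp add: C_def)
  define \<phi> where "\<phi> = (\<lambda>z. if C < cmod (g z) then (1::complex) else 0)"
  have \<phi>m[measurable]: "\<phi> \<in> borel_measurable borel" unfolding \<phi>_def by measurable
  have \<phi>L: "Linf \<phi>" unfolding Linf_def by (intro conjI exI[of _ 1]) (auto simp: \<phi>_def borel_M_iff)
  have pg: "L2 (\<lambda>z. \<phi> z * g z)" using L2_mult_Linf[OF \<phi>L gL] .
  have "norm2 (\<lambda>z. \<phi> z * g z) = norm2 (X \<phi>)"
    using commutes_Linf_on_Linf[OF cX \<phi>L] pg bounded_op_L2[OF X Linf_L2[OF \<phi>L]]
    by (intro norm2_ae) (auto simp: g_def intro: ae_eq_sym)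
  also have "\<dots> \<le> C * norm2 \<phi>" using C(1)[OF Linf_L2[OF \<phi>L]] .
  finally have "(norm2 (\<lambda>z. \<phi> z * g z))^2 \<le> (C * norm2 \<phi>)^2"
    using norm2_nonneg by (intro power_mono) auto
  then have "(LINT z|M. (cmod (\<phi> z * g z))^2) \<le> C^2 * (LINT z|M. (cmod (\<phi> z))^2)"
    using norm2_sq[OF pg] norm2_sq[OF Linf_L2[OF \<phi>L]] by (simp add: power_mult_distrib)
  moreover have "(\<lambda>z. (cmod (\<phi> z * g z))^2) = (\<lambda>z. if C < cmod (g z) then (cmod (g z))^2 else 0)"
    by (auto simp: \<phi>_def)
  moreover have "(\<lambda>z. if C < cmod (g z) then C^2 else 0) = (\<lambda>z. C^2 * (cmod (\<phi> z))^2)"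
    by (auto simp: \<phi>_def)
  ultimately have "(LINT z|M. (if C < cmod (g z) then (cmod (g z))^2 else 0)) \<le> (LINT z|M. (if C < cmod (g z) then C^2 else 0))"
    by simp
  then have "AE z in M. cmod (g z) \<le> C" by (rule ae_bound_from_level_set[OF gL C(2)])
  then show ?thesis unfolding g_def[symmetric] Linf_def using gm by (auto simp: borel_M_iff)
qed

lemma commutes_Linf_adj:
  assumes X: "bounded_op X" and cX: "commutes_Linf X"
  shows "commutes_Linf (adj X)"
  unfolding commutes_Linf_def
proof (intro allI impI)
  fix \<phi> f assume \<phi>: "Linf \<phi>" and f: "L2 f"
  have Y: "bounded_op (adj X)" using adj_bounded_op[OF X] .
  show "ae_eq (adj X (\<lambda>z. \<phi> z * f z)) (\<lambda>z. \<phi> z * adj X f z)"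
  proof (rule ae_eq_if_inner2_right)
    show "L2 (adj X (\<lambda>z. \<phi> z * f z))" using bounded_op_L2[OF Y L2_mult_Linf[OF \<phi> f]] .
    show "L2 (\<lambda>z. \<phi> z * adj X f z)" using L2_mult_Linf[OF \<phi> bounded_op_L2[OF Y f]] .
    fix h assume h: "L2 h"
    have ch: "L2 (\<lambda>z. cnj (\<phi> z) * h z)" using L2_mult_Linf[OF Linf_cnj[OF \<phi>] h] .
    have "inner2 h (adj X (\<lambda>z. \<phi> z * f z)) = inner2 (\<lambda>z. cnj (\<phi> z) * X h z) f"
      using adj_inner[OF X h L2_mult_Linf[OF \<phi> f]] inner2_mult[of "\<lambda>z. cnj (\<phi> z)" "X h" f] by simp
    also have "\<dots> = inner2 (X (\<lambda>z. cnj (\<phi> z) * h z)) f"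
      using cX Linf_cnj[OF \<phi>] h f bounded_op_L2[OF X] ch L2_mult_Linf[OF Linf_cnj[OF \<phi>] bounded_op_L2[OF X h]]
      unfolding commutes_Linf_def by (intro inner2_ae_left) (auto intro: ae_eq_sym)
    also have "\<dots> = inner2 h (\<lambda>z. \<phi> z * adj X f z)"
      using adj_inner[OF X ch f] inner2_mult[of "\<lambda>z. cnj (\<phi> z)" h "adj X f"] by simp
    finally show "inner2 h (adj X (\<lambda>z. \<phi> z * f z)) = inner2 h (\<lambda>z. \<phi> z * adj X f z)" .
  qed
qed

text \<open>With k the symbol of the adjoint,
  the inner products of X f with bounded functions are those of (cnj k) f.\<close>
theorem commutant_Linf:
  assumes X: "bounded_op X" and cX: "commutes_Linf X"
  shows "Linf (X (\<lambda>z. 1)) \<and> (\<forall>f. L2 f \<longrightarrow> ae_eq (X f) (\<lambda>z. X (\<lambda>z. 1) z * f z))"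
proof -
  define k where "k = adj X (\<lambda>z. 1)"
  have Y: "bounded_op (adj X)" using adj_bounded_op[OF X] .
  have kL: "Linf k"
    unfolding k_def using commutes_Linf_symbol_Linf[OF Y commutes_Linf_adj[OF X cX]] .
  have ck: "Linf (\<lambda>z. cnj (k z))" using Linf_cnj[OF kL] .
  have main: "ae_eq (X f) (\<lambda>z. cnj (k z) * f z)" if f: "L2 f" for f
  proof -
    have D: "L2 (\<lambda>z. X f z - cnj (k z) * f z)"
      using L2_minus[OF bounded_op_L2[OF X f] L2_mult_Linf[OF ck f]] .
    have "ae_eq (\<lambda>z. X f z - cnj (k z) * f z) (\<lambda>z. 0)"
    proof (rule orthogonal_to_Linf[OF D])
      fix \<psi> assume \<psi>: "Linf \<psi>"
      have "inner2 (X f) \<psi> = inner2 f (adj X \<psi>)" using adj_inner[OF X f Linf_L2[OF \<psi>]] .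
      also have "\<dots> = inner2 f (\<lambda>z. k z * \<psi> z)"
        using commutes_Linf_on_Linf[OF commutes_Linf_adj[OF X cX] \<psi>] f bounded_op_L2[OF Y Linf_L2[OF \<psi>]]
          L2_mult_Linf[OF \<psi> Linf_L2[OF kL]]
        by (intro inner2_ae_right) (auto simp: k_def mult.commute)
      also have "\<dots> = inner2 (\<lambda>z. cnj (k z) * f z) \<psi>" using inner2_mult[of "\<lambda>z. cnj (k z)" f \<psi>] by simp
      finally show "inner2 (\<lambda>z. X f z - cnj (k z) * f z) \<psi> = 0"
        using bounded_op_L2[OF X f] L2_mult_Linf[OF ck f] Linf_L2[OF \<psi>] by (simp add: inner2_minus_left)
    qed
    then show ?thesis unfolding ae_eq_def by eventually_elim simp
  qed
  have one: "ae_eq (\<lambda>z. cnj (k z)) (X (\<lambda>z. 1))" using main[of "\<lambda>z. 1"] by (simp add: ae_eq_sym)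
  have "Linf (X (\<lambda>z. 1))"
    using Linf_ae[OF ck L2_meas[OF bounded_op_L2[OF X L2_const]] one] .
  moreover have "ae_eq (X f) (\<lambda>z. X (\<lambda>z. 1) z * f z)" if "L2 f" for f
  proof -
    have "ae_eq (\<lambda>z. cnj (k z) * f z) (\<lambda>z. X (\<lambda>z. 1) z * f z)"
      using one unfolding ae_eq_def by eventually_elim simp
    then show ?thesis using main[OF that] ae_eq_trans by blast
  qed
  ultimately show ?thesis by blast
qed

lemma cuntz_bounded: "cuntz_family N S \<Longrightarrow> i < N \<Longrightarrow> bounded_op (S i)"
  unfolding cuntz_family_def by blast

lemma cuntz_adj_bounded: "cuntz_family N S \<Longrightarrow> i < N \<Longrightarrow> bounded_op (adj (S i))"
  using cuntz_bounded adj_bounded_op by blast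

lemma cuntz_orth:
  assumes "cuntz_family N S" "i < N" "j < N" "L2 f"
  shows "ae_eq (adj (S i) (S j f)) (\<lambda>z. if i = j then f z else 0)"
proof -
  have "op_eq (adj (S i) \<circ> S j) (if i = j then id else zero_op)"
    using assms unfolding cuntz_family_def by blast
  then show ?thesis using assms(4) unfolding op_eq_def by (cases "i = j") (auto simp: zero_op_def)
qed

lemma cuntz_sum:
  assumes "cuntz_family N S" "L2 f"
  shows "ae_eq (\<lambda>z. \<Sum>i<N. S i (adj (S i) f) z) f"
  using assms unfolding cuntz_family_def op_eq_def by auto

lemma cuntz_adj_sum:
  assumes S: "cuntz_family N S" and k: "k < N" and G: "\<And>i. i < N \<Longrightarrow> L2 (G i)"
  shows "ae_eq (adj (S k) (\<lambda>z. \<Sum>i<N. S i (G i) z)) (G k)"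
proof -
  have "ae_eq (adj (S k) (\<lambda>z. \<Sum>i<N. S i (G i) z)) (\<lambda>z. \<Sum>i<N. adj (S k) (S i (G i)) z)"
    using G by (intro bounded_op_sum[OF cuntz_adj_bounded[OF S k]]) (auto intro: bounded_op_L2[OF cuntz_bounded[OF S]])
  also have "ae_eq \<dots> (\<lambda>z. \<Sum>i<N. (if k = i then G i z else 0))"
    using G by (intro ae_eq_sum cuntz_orth[OF S k]) auto
  also have "(\<lambda>z. \<Sum>i<N. (if k = i then G i z else 0)) = G k"
    using k by (simp add: sum.delta)
  finally show ?thesis .
qed

lemma alphaS_L2:
  assumes S: "cuntz_family N S" and T: "bounded_op T" and f: "L2 f"
  shows "L2 (alphaS N S T f)"
  unfolding alphaS_def
  by (intro L2_sum bounded_op_L2[OF cuntz_bounded[OF S]] bounded_op_L2[OF T]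
      bounded_op_L2[OF cuntz_adj_bounded[OF S]] f) auto

lemma alphaS_on_range:
  assumes S: "cuntz_family N S" and T: "bounded_op T" and j: "j < N" and h: "L2 h"
  shows "ae_eq (alphaS N S T (S j h)) (S j (T h))"
proof -
  have "ae_eq (S i (T (adj (S i) (S j h)))) (\<lambda>z. if i = j then S j (T h) z else 0)" if i: "i < N" for i
  proof -
    have Lif: "L2 (\<lambda>z. if i = j then h z else 0)" using h by (cases "i = j") simp_all
    have "ae_eq (T (adj (S i) (S j h))) (T (\<lambda>z. if i = j then h z else 0))"
      using cuntz_orth[OF S i j h] h Lif
      by (intro bounded_op_ae[OF T] bounded_op_L2[OF cuntz_adj_bounded[OF S i]] bounded_op_L2[OF cuntz_bounded[OF S j]])
    then have "ae_eq (S i (T (adj (S i) (S j h)))) (S i (T (\<lambda>z. if i = j then h z else 0)))"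
      using h Lif by (intro bounded_op_ae[OF cuntz_bounded[OF S i]] bounded_op_L2[OF T]
          bounded_op_L2[OF cuntz_adj_bounded[OF S i]] bounded_op_L2[OF cuntz_bounded[OF S j]])
    also have "ae_eq \<dots> (\<lambda>z. if i = j then S j (T h) z else 0)"
      using bounded_op_zero[OF T] bounded_op_zero[OF cuntz_bounded[OF S i]]
        bounded_op_ae[OF cuntz_bounded[OF S i] bounded_op_L2[OF T L2_const] L2_const, of 0]
      by (cases "i = j") (auto intro: ae_eq_trans)
    finally show ?thesis .
  qed
  then have "ae_eq (alphaS N S T (S j h)) (\<lambda>z. \<Sum>i<N. (if i = j then S j (T h) z else 0))"
    unfolding alphaS_def by (intro ae_eq_sum) auto
  also have "(\<lambda>z. \<Sum>i<N. (if i = j then S j (T h) z else 0)) = S j (T h)"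
    using j by (simp add: sum.delta)
  finally show ?thesis .
qed

lemma adj_alphaS:
  assumes S: "cuntz_family N S" and T: "bounded_op T" and k: "k < N" and g: "L2 g"
  shows "ae_eq (adj (S k) (alphaS N S T g)) (T (adj (S k) g))"
  unfolding alphaS_def
  by (rule cuntz_adj_sum[OF S k]) (intro bounded_op_L2[OF T] bounded_op_L2[OF cuntz_adj_bounded[OF S]] g)

lemma transition_commutes:
  assumes S1: "cuntz_family N S1" and S2: "cuntz_family N S2" and T: "bounded_op T"
    and agree: "op_eq (alphaS N S1 T) (alphaS N S2 T)"
    and i: "i < N" and j: "j < N" and f: "L2 f"
  shows "ae_eq (adj (S1 i) (S2 j (T f))) (T (adj (S1 i) (S2 j f)))"
proof -
  have s: "L2 (S2 j f)" using bounded_op_L2[OF cuntz_bounded[OF S2 j] f] .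
  have "ae_eq (S2 j (T f)) (alphaS N S1 T (S2 j f))"
    using ae_eq_sym[OF alphaS_on_range[OF S2 T j f]] agree s unfolding op_eq_def
    by (meson ae_eq_sym ae_eq_trans)
  then have "ae_eq (adj (S1 i) (S2 j (T f))) (adj (S1 i) (alphaS N S1 T (S2 j f)))"
    by (intro bounded_op_ae[OF cuntz_adj_bounded[OF S1 i]] bounded_op_L2[OF cuntz_bounded[OF S2 j]]
        bounded_op_L2[OF T] alphaS_L2[OF S1 T s] f)
  also have "ae_eq \<dots> (T (adj (S1 i) (S2 j f)))" by (rule adj_alphaS[OF S1 T i s])
  finally show ?thesis .
qed

section \<open>Transition matrices between two Cuntz families\<close>

definition transition_matrix :: "nat \<Rightarrow> (nat \<Rightarrow> op) \<Rightarrow> (nat \<Rightarrow> op) \<Rightarrow> (nat \<Rightarrow> nat \<Rightarrow> complex \<Rightarrow> complex) \<Rightarrow> bool" where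
  "transition_matrix N S1 S2 u \<longleftrightarrow> (\<forall>i<N. \<forall>j<N. Linf (u i j) \<and>
     (\<forall>f. L2 f \<longrightarrow> ae_eq (adj (S1 i) (S2 j f)) (\<lambda>z. u i j z * f z)))"

lemma orthonormal_row_contract:
  fixes x :: "nat \<Rightarrow> 'a::comm_ring_1"
  assumes i: "i < N" and orth: "\<And>k. k < N \<Longrightarrow> (\<Sum>j<N. x j * y k j) = (if i = k then 1 else 0)"
  shows "(\<Sum>j<N. x j * (p * (\<Sum>k<N. y k j * a k))) = p * a i"
proof -
  have "(\<Sum>j<N. x j * (p * (\<Sum>k<N. y k j * a k))) = (\<Sum>k<N. \<Sum>j<N. p * (x j * y k j * a k))"
    by (subst sum.swap) (simp add: sum_distrib_left mult_ac)
  also have "\<dots> = p * (\<Sum>k<N. (\<Sum>j<N. x j * y k j) * a k)"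
    by (simp add: sum_distrib_left sum_distrib_right mult_ac)
  also have "\<dots> = p * (\<Sum>k<N. (if i = k then a k else 0))"
    using orth by (intro arg_cong[where f="\<lambda>s. p * s"] sum.cong) auto
  also have "\<dots> = p * a i" using i by (simp add: sum.delta)
  finally show ?thesis .
qed

lemma unitary_rows_AE:
  "unitary_Linf N u \<Longrightarrow> AE z in M. \<forall>i<N. \<forall>k<N. (\<Sum>j<N. u i j z * cnj (u k j z)) = (if i = k then 1 else 0)"
  unfolding unitary_Linf_def by (intro ae_eq_all_pairs) auto

locale cuntz_pair =
  fixes N :: nat and S1 S2 :: "nat \<Rightarrow> op"
  assumes S1: "cuntz_family N S1" and S2: "cuntz_family N S2"
begin

abbreviation "A1 i \<equiv> adj (S1 i)"
abbreviation "A2 i \<equiv> adj (S2 i)"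

lemma S1_bounded: "i < N \<Longrightarrow> bounded_op (S1 i)" using cuntz_bounded[OF S1] .
lemma S2_bounded: "i < N \<Longrightarrow> bounded_op (S2 i)" using cuntz_bounded[OF S2] .
lemma S1_adj_bounded: "i < N \<Longrightarrow> bounded_op (A1 i)" using cuntz_adj_bounded[OF S1] .
lemma S2_adj_bounded: "i < N \<Longrightarrow> bounded_op (A2 i)" using cuntz_adj_bounded[OF S2] .

lemma transition_Linf: "transition_matrix N S1 S2 u \<Longrightarrow> i < N \<Longrightarrow> j < N \<Longrightarrow> Linf (u i j)"
  unfolding transition_matrix_def by blast

lemma transition_mult:
  "transition_matrix N S1 S2 u \<Longrightarrow> i < N \<Longrightarrow> j < N \<Longrightarrow> L2 f \<Longrightarrow> ae_eq (A1 i (S2 j f)) (\<lambda>z. u i j z * f z)"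
  unfolding transition_matrix_def by blast

lemma transition_imp_linked:
  assumes u: "transition_matrix N S1 S2 u"
  shows "linked N S1 S2 u"
  unfolding linked_def op_eq_def mult_op_def
proof (intro allI impI)
  fix j f assume j: "j < N" and f: "L2 f"
  have s: "L2 (S2 j f)" using bounded_op_L2[OF S2_bounded[OF j] f] .
  have "ae_eq (\<lambda>z. \<Sum>i<N. S1 i (\<lambda>w. u i j w * f w) z) (\<lambda>z. \<Sum>i<N. S1 i (A1 i (S2 j f)) z)"
  proof (rule ae_eq_sum)
    fix i assume "i \<in> {..<N}" then have i: "i < N" by simp
    show "ae_eq (S1 i (\<lambda>w. u i j w * f w)) (S1 i (A1 i (S2 j f)))"
      using transition_mult[OF u i j f] L2_mult_Linf[OF transition_Linf[OF u i j] f] bounded_op_L2[OF S1_adj_bounded[OF i] s]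
      by (intro bounded_op_ae[OF S1_bounded[OF i]]) (auto intro: ae_eq_sym)
  qed simp
  also have "ae_eq \<dots> (S2 j f)" using cuntz_sum[OF S1 s] .
  finally show "ae_eq (S2 j f) (\<lambda>z. \<Sum>i<N. S1 i (\<lambda>w. u i j w * f w) z)" by (rule ae_eq_sym)
qed

lemma linked_imp_transition:
  assumes lk: "linked N S1 S2 u" and uL: "\<And>i j. i < N \<Longrightarrow> j < N \<Longrightarrow> Linf (u i j)"
  shows "transition_matrix N S1 S2 u"
  unfolding transition_matrix_def
proof (intro allI impI conjI uL)
  fix k j f assume k: "k < N" and j: "j < N" and f: "L2 f"
  have uf: "i < N \<Longrightarrow> L2 (\<lambda>w. u i j w * f w)" for i using L2_mult_Linf[OF uL[OF _ j] f] .
  have "ae_eq (A1 k (S2 j f)) (A1 k (\<lambda>z. \<Sum>i<N. S1 i (\<lambda>w. u i j w * f w) z))"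
    using lk j f bounded_op_L2[OF S2_bounded[OF j] f] uf unfolding linked_def op_eq_def mult_op_def
    by (intro bounded_op_ae[OF S1_adj_bounded[OF k]]) (auto intro!: L2_sum bounded_op_L2[OF S1_bounded])
  also have "ae_eq \<dots> (\<lambda>z. u k j z * f z)" by (rule cuntz_adj_sum[OF S1 k uf])
  finally show "ae_eq (A1 k (S2 j f)) (\<lambda>z. u k j z * f z)" .
qed

lemma transition_adj:
  assumes u: "transition_matrix N S1 S2 u" and j: "j < N" and i: "i < N" and h: "L2 h"
  shows "ae_eq (\<lambda>z. cnj (u j i z) * h z) (A2 i (S1 j h))"
proof (rule ae_eq_if_inner2_left)
  have uL: "Linf (u j i)" using transition_Linf[OF u j i] .
  show "L2 (\<lambda>z. cnj (u j i z) * h z)" using L2_mult_Linf[OF Linf_cnj[OF uL] h] .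
  show "L2 (A2 i (S1 j h))" using bounded_op_L2[OF S2_adj_bounded[OF i] bounded_op_L2[OF S1_bounded[OF j] h]] .
  fix f assume f: "L2 f"
  have "inner2 (\<lambda>z. cnj (u j i z) * h z) f = inner2 h (\<lambda>z. u j i z * f z)"
    using inner2_mult[of "\<lambda>z. cnj (u j i z)" h f] by simp
  also have "\<dots> = inner2 h (A1 j (S2 i f))"
    using transition_mult[OF u j i f] h L2_mult_Linf[OF uL f] bounded_op_L2[OF S1_adj_bounded[OF j] bounded_op_L2[OF S2_bounded[OF i] f]]
    by (intro inner2_ae_right) (auto intro: ae_eq_sym)
  also have "\<dots> = inner2 (S1 j h) (S2 i f)"
    using adj_inner[OF S1_bounded[OF j] h bounded_op_L2[OF S2_bounded[OF i] f]] by simp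
  also have "\<dots> = inner2 (A2 i (S1 j h)) f"
    using adj_inner'[OF S2_bounded[OF i] f bounded_op_L2[OF S1_bounded[OF j] h]] by simp
  finally show "inner2 (\<lambda>z. cnj (u j i z) * h z) f = inner2 (A2 i (S1 j h)) f" .
qed

text \<open>S2_j* = sum_k pi(cnj u_kj) S1_k*, obtained by inserting sum_k S1_k S1_k* = 1.\<close>
lemma transition_adj_expand:
  assumes u: "transition_matrix N S1 S2 u" and j: "j < N" and g: "L2 g"
  shows "ae_eq (A2 j g) (\<lambda>v. \<Sum>k<N. cnj (u k j v) * A1 k g v)"
proof -
  have a: "k < N \<Longrightarrow> L2 (A1 k g)" for k using bounded_op_L2[OF S1_adj_bounded g] .
  have "ae_eq (A2 j g) (A2 j (\<lambda>z. \<Sum>k<N. S1 k (A1 k g) z))"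
    using cuntz_sum[OF S1 g] g a
    by (intro bounded_op_ae[OF S2_adj_bounded[OF j]]) (auto intro!: L2_sum bounded_op_L2[OF S1_bounded] intro: ae_eq_sym)
  also have "ae_eq \<dots> (\<lambda>z. \<Sum>k<N. A2 j (S1 k (A1 k g)) z)"
    using a by (intro bounded_op_sum[OF S2_adj_bounded[OF j]]) (auto intro: bounded_op_L2[OF S1_bounded])
  also have "ae_eq \<dots> (\<lambda>v. \<Sum>k<N. cnj (u k j v) * A1 k g v)"
    using a by (intro ae_eq_sum) (auto intro: ae_eq_sym transition_adj[OF u _ j])
  finally show ?thesis .
qed

text \<open>A transition matrix is automatically unitary: its rows and columns are orthonormal
  because of the Cuntz relations of S2 and S1 respectively.\<close>
lemma transition_unitary:
  assumes u: "transition_matrix N S1 S2 u"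
  shows "unitary_Linf N u"
proof -
  have one: "L2 (\<lambda>z::complex. 1::complex)" by simp
  have rows: "ae_eq (\<lambda>z. \<Sum>k<N. u i k z * cnj (u j k z)) (\<lambda>z. if i = j then 1 else 0)"
    if i: "i < N" and j: "j < N" for i j
  proof -
    have s: "L2 (S1 j (\<lambda>z. 1))" using bounded_op_L2[OF S1_bounded[OF j] one] .
    have a: "k < N \<Longrightarrow> L2 (A2 k (S1 j (\<lambda>z. 1)))" for k using bounded_op_L2[OF S2_adj_bounded s] .
    have "ae_eq (\<lambda>z. \<Sum>k<N. u i k z * cnj (u j k z)) (\<lambda>z. \<Sum>k<N. u i k z * A2 k (S1 j (\<lambda>z. 1)) z)"
      using ae_eq_mult[OF transition_adj[OF u j _ one]] by (intro ae_eq_sum) simp_all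
    also have "ae_eq \<dots> (\<lambda>z. \<Sum>k<N. A1 i (S2 k (A2 k (S1 j (\<lambda>z. 1)))) z)"
      using a by (intro ae_eq_sum ae_eq_sym[OF transition_mult[OF u i]]) auto
    also have "ae_eq \<dots> (A1 i (\<lambda>z. \<Sum>k<N. S2 k (A2 k (S1 j (\<lambda>z. 1))) z))"
      using a by (intro ae_eq_sym[OF bounded_op_sum[OF S1_adj_bounded[OF i]]]) (auto intro!: bounded_op_L2[OF S2_bounded])
    also have "ae_eq \<dots> (A1 i (S1 j (\<lambda>z. 1)))"
      using cuntz_sum[OF S2 s] s a by (intro bounded_op_ae[OF S1_adj_bounded[OF i]]) (auto intro!: L2_sum bounded_op_L2[OF S2_bounded])
    also have "ae_eq \<dots> (\<lambda>z. if i = j then 1 else 0)"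
      using cuntz_orth[OF S1 i j one] by simp
    finally show ?thesis .
  qed
  have cols: "ae_eq (\<lambda>z. \<Sum>k<N. cnj (u k i z) * u k j z) (\<lambda>z. if i = j then 1 else 0)"
    if i: "i < N" and j: "j < N" for i j
  proof -
    have s: "L2 (S2 j (\<lambda>z. 1))" using bounded_op_L2[OF S2_bounded[OF j] one] .
    have a: "k < N \<Longrightarrow> L2 (A1 k (S2 j (\<lambda>z. 1)))" for k using bounded_op_L2[OF S1_adj_bounded s] .
    have "ae_eq (\<lambda>z. \<Sum>k<N. cnj (u k i z) * u k j z) (\<lambda>z. \<Sum>k<N. cnj (u k i z) * A1 k (S2 j (\<lambda>z. 1)) z)"
      using transition_mult[OF u _ j one] by (intro ae_eq_sum ae_eq_mult) (auto intro: ae_eq_sym)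
    also have "ae_eq \<dots> (\<lambda>z. \<Sum>k<N. A2 i (S1 k (A1 k (S2 j (\<lambda>z. 1)))) z)"
      using a by (intro ae_eq_sum transition_adj[OF u _ i]) auto
    also have "ae_eq \<dots> (A2 i (\<lambda>z. \<Sum>k<N. S1 k (A1 k (S2 j (\<lambda>z. 1))) z))"
      using a by (intro ae_eq_sym[OF bounded_op_sum[OF S2_adj_bounded[OF i]]]) (auto intro!: bounded_op_L2[OF S1_bounded])
    also have "ae_eq \<dots> (A2 i (S2 j (\<lambda>z. 1)))"
      using cuntz_sum[OF S1 s] s a by (intro bounded_op_ae[OF S2_adj_bounded[OF i]]) (auto intro!: L2_sum bounded_op_L2[OF S1_bounded])
    also have "ae_eq \<dots> (\<lambda>z. if i = j then 1 else 0)"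
      using cuntz_orth[OF S2 i j one] by simp
    finally show ?thesis .
  qed
  show ?thesis unfolding unitary_Linf_def using transition_Linf[OF u] rows cols by blast
qed

lemma alphaS_expand:
  assumes u: "transition_matrix N S1 S2 u" and T: "bounded_op T" and f: "L2 f"
  shows "ae_eq (alphaS N S2 T f)
     (\<lambda>z. \<Sum>i<N. S1 i (\<lambda>w. \<Sum>j<N. u i j w * T (\<lambda>v. \<Sum>k<N. cnj (u k j v) * A1 k f v) w) z)"
proof -
  define G where "G = (\<lambda>j v. \<Sum>k<N. cnj (u k j v) * A1 k f v)"
  have GL: "j < N \<Longrightarrow> L2 (G j)" for j
    unfolding G_def by (intro L2_sum L2_mult_Linf Linf_cnj transition_Linf[OF u] bounded_op_L2[OF S1_adj_bounded] f) auto
  have TGL: "j < N \<Longrightarrow> L2 (T (G j))" for j using bounded_op_L2[OF T GL] .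
  have uTG: "i < N \<Longrightarrow> j < N \<Longrightarrow> L2 (\<lambda>w. u i j w * T (G j) w)" for i j
    using L2_mult_Linf[OF transition_Linf[OF u] TGL] .
  have "ae_eq (alphaS N S2 T f) (\<lambda>z. \<Sum>j<N. S2 j (T (G j)) z)"
    unfolding alphaS_def
  proof (rule ae_eq_sum)
    fix j assume "j \<in> {..<N}" then have j: "j < N" by simp
    have "ae_eq (T (A2 j f)) (T (G j))"
      using transition_adj_expand[OF u j f] bounded_op_L2[OF S2_adj_bounded[OF j] f] GL[OF j] unfolding G_def
      by (intro bounded_op_ae[OF T]) auto
    then show "ae_eq (S2 j (T (A2 j f))) (S2 j (T (G j)))"
      using bounded_op_L2[OF T bounded_op_L2[OF S2_adj_bounded[OF j] f]] TGL[OF j] by (intro bounded_op_ae[OF S2_bounded[OF j]]) auto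
  qed simp
  also have "ae_eq \<dots> (\<lambda>z. \<Sum>j<N. \<Sum>i<N. S1 i (\<lambda>w. u i j w * T (G j) w) z)"
    using transition_imp_linked[OF u] TGL unfolding linked_def op_eq_def mult_op_def
    by (intro ae_eq_sum) auto
  also have "(\<lambda>z. \<Sum>j<N. \<Sum>i<N. S1 i (\<lambda>w. u i j w * T (G j) w) z) =
             (\<lambda>z. \<Sum>i<N. \<Sum>j<N. S1 i (\<lambda>w. u i j w * T (G j) w) z)"
    by (rule ext, rule sum.swap)
  also have "ae_eq \<dots> (\<lambda>z. \<Sum>i<N. S1 i (\<lambda>w. \<Sum>j<N. u i j w * T (G j) w) z)"
    using uTG by (intro ae_eq_sum ae_eq_sym[OF bounded_op_sum[OF S1_bounded]]) auto
  finally show ?thesis unfolding G_def .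
qed

lemma alphaS_eq_if_row_identity:
  assumes u: "transition_matrix N S1 S2 u" and T: "bounded_op T"
    and row: "\<And>i G. i < N \<Longrightarrow> (\<And>k. k < N \<Longrightarrow> L2 (G k)) \<Longrightarrow>
        ae_eq (\<lambda>w. \<Sum>j<N. u i j w * T (\<lambda>v. \<Sum>k<N. cnj (u k j v) * G k v) w) (T (G i))"
  shows "op_eq (alphaS N S1 T) (alphaS N S2 T)"
  unfolding op_eq_def
proof (intro allI impI)
  fix f assume f: "L2 f"
  have A1f: "k < N \<Longrightarrow> L2 (A1 k f)" for k using bounded_op_L2[OF S1_adj_bounded f] .
  have "ae_eq (alphaS N S2 T f) (\<lambda>z. \<Sum>i<N. S1 i (T (A1 i f)) z)"
  proof (rule ae_eq_trans[OF alphaS_expand[OF u T f] ae_eq_sum])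
    fix i assume "i \<in> {..<N}" then have i: "i < N" by simp
    show "ae_eq (S1 i (\<lambda>w. \<Sum>j<N. u i j w * T (\<lambda>v. \<Sum>k<N. cnj (u k j v) * A1 k f v) w)) (S1 i (T (A1 i f)))"
      using row[OF i A1f] A1f i
      by (intro bounded_op_ae[OF S1_bounded[OF i]])
        (auto intro!: L2_sum L2_mult_Linf Linf_cnj transition_Linf[OF u] bounded_op_L2[OF T])
  qed simp
  then show "ae_eq (alphaS N S1 T f) (alphaS N S2 T f)" unfolding alphaS_def by (rule ae_eq_sym)
qed


text \<open>alpha_S1 and alpha_S2 agree on multiplication operators: pi(phi) commutes with pi(u_ij),
  and the rows of u are orthonormal.\<close>
lemma alphaS_mult_agree:
  assumes u: "transition_matrix N S1 S2 u" and \<phi>: "Linf \<phi>"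
  shows "op_eq (alphaS N S1 (mult_op \<phi>)) (alphaS N S2 (mult_op \<phi>))"
proof (rule alphaS_eq_if_row_identity[OF u mult_op_bounded[OF \<phi>]])
  fix i G assume i: "i < N"
  show "ae_eq (\<lambda>w. \<Sum>j<N. u i j w * mult_op \<phi> (\<lambda>v. \<Sum>k<N. cnj (u k j v) * G k v) w) (mult_op \<phi> (G i))"
    using unitary_rows_AE[OF transition_unitary[OF u]] unfolding ae_eq_def mult_op_def
    by eventually_elim (use i in \<open>auto intro: orthonormal_row_contract\<close>)
qed

lemma alphaS_agree_if_constant:
  assumes u: "transition_matrix N S1 S2 u" and c: "constant_matrix N u" and T: "bounded_op T"
  shows "op_eq (alphaS N S1 T) (alphaS N S2 T)"
proof (rule alphaS_eq_if_row_identity[OF u T])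
  fix i G assume i: "i < N" and G: "\<And>k. k < N \<Longrightarrow> L2 (G k)"
  obtain c where c: "\<And>i j. i < N \<Longrightarrow> j < N \<Longrightarrow> ae_eq (u i j) (\<lambda>z. c i j)"
    using c unfolding constant_matrix_def by blast
  have uc: "AE z in M. \<forall>i<N. \<forall>j<N. u i j z = c i j" by (rule ae_eq_all_pairs[OF c])
  have c_orth: "(\<Sum>j<N. c i j * cnj (c k j)) = (if i = k then 1 else 0)" if "i < N" "k < N" for i k
  proof -
    have "AE z in M. (\<Sum>j<N. c i j * cnj (c k j)) = (if i = k then 1 else 0)"
      using uc unitary_rows_AE[OF transition_unitary[OF u]] by eventually_elim (use that in simp)
    then show ?thesis by (simp add: C.AE_const)
  qed
  have TG: "ae_eq (T (\<lambda>v. \<Sum>k<N. cnj (u k j v) * G k v)) (\<lambda>w. \<Sum>k<N. cnj (c k j) * T (G k) w)"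
    if j: "j < N" for j
  proof -
    have "ae_eq (\<lambda>v. \<Sum>k<N. cnj (u k j v) * G k v) (\<lambda>v. \<Sum>k<N. cnj (c k j) * G k v)"
      using uc unfolding ae_eq_def by eventually_elim (use j in auto)
    then have "ae_eq (T (\<lambda>v. \<Sum>k<N. cnj (u k j v) * G k v)) (T (\<lambda>v. \<Sum>k<N. cnj (c k j) * G k v))"
      using G j by (intro bounded_op_ae[OF T])
        (auto intro!: L2_sum L2_scale L2_mult_Linf Linf_cnj transition_Linf[OF u])
    also have "ae_eq \<dots> (\<lambda>w. \<Sum>k<N. T (\<lambda>v. cnj (c k j) * G k v) w)"
      using G by (intro bounded_op_sum[OF T]) (auto intro!: L2_scale)
    also have "ae_eq \<dots> (\<lambda>w. \<Sum>k<N. cnj (c k j) * T (G k) w)"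
      using G by (intro ae_eq_sum bounded_op_scale[OF T]) auto
    finally show ?thesis .
  qed
  have "AE w in M. \<forall>j<N. T (\<lambda>v. \<Sum>k<N. cnj (u k j v) * G k v) w = (\<Sum>k<N. cnj (c k j) * T (G k) w)"
    using ae_eq_all_pairs[of N "\<lambda>_ j. T (\<lambda>v. \<Sum>k<N. cnj (u k j v) * G k v)" "\<lambda>_ j w. \<Sum>k<N. cnj (c k j) * T (G k) w"] TG
    by (auto elim: AE_mp)
  then show "ae_eq (\<lambda>w. \<Sum>j<N. u i j w * T (\<lambda>v. \<Sum>k<N. cnj (u k j v) * G k v) w) (T (G i))"
    using uc unfolding ae_eq_def
  proof eventually_elim
    case (elim w)
    have "(\<Sum>j<N. u i j w * T (\<lambda>v. \<Sum>k<N. cnj (u k j v) * G k v) w)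
        = (\<Sum>j<N. c i j * (1 * (\<Sum>k<N. cnj (c k j) * T (G k) w)))"
      using elim i by (intro sum.cong) auto
    also have "\<dots> = T (G i) w" using orthonormal_row_contract[OF i c_orth[OF i], of 1 "\<lambda>k. T (G k) w"] by simp
    finally show ?case .
  qed
qed


text \<open>If alpha_S1 and alpha_S2 agree on pi(L-infinity), the transition operators commute with
  L-infinity, so by maximal abelianness they are multiplications by L-infinity functions.\<close>
lemma transition_exists:
  assumes agree: "\<And>\<phi>. Linf \<phi> \<Longrightarrow> op_eq (alphaS N S1 (mult_op \<phi>)) (alphaS N S2 (mult_op \<phi>))"
  shows "transition_matrix N S1 S2 (\<lambda>i j. A1 i (S2 j (\<lambda>z. 1)))"
  unfolding transition_matrix_def
proof (intro allI impI)
  fix i j assume i: "i < N" and j: "j < N"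
  have "commutes_Linf (\<lambda>f. A1 i (S2 j f))"
    unfolding commutes_Linf_def
  proof (intro allI impI)
    fix \<phi> f assume \<phi>: "Linf \<phi>" and f: "L2 f"
    show "ae_eq (A1 i (S2 j (\<lambda>z. \<phi> z * f z))) (\<lambda>z. \<phi> z * A1 i (S2 j f) z)"
      using transition_commutes[OF S1 S2 mult_op_bounded[OF \<phi>] agree[OF \<phi>] i j f]
      by (simp add: mult_op_def)
  qed
  then show "Linf (A1 i (S2 j (\<lambda>z. 1))) \<and>
      (\<forall>f. L2 f \<longrightarrow> ae_eq (A1 i (S2 j f)) (\<lambda>z. A1 i (S2 j (\<lambda>z. 1)) z * f z))"
    using commutant_Linf[OF bounded_op_comp[OF S1_adj_bounded[OF i] S2_bounded[OF j]]] by blast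
qed


text \<open>If alpha_S1 and alpha_S2 agree on the projection onto the constants, the transition
  matrix is constant: u_ij = S1_i* S2_j 1 is fixed by that projection.\<close>
lemma constant_if_alphaS_agree:
  assumes u: "transition_matrix N S1 S2 u"
    and agree: "op_eq (alphaS N S1 mean_proj) (alphaS N S2 mean_proj)"
  shows "constant_matrix N u"
  unfolding constant_matrix_def
proof (intro exI[of _ "\<lambda>k j. inner2 (A1 k (S2 j (\<lambda>z. 1))) (\<lambda>z. 1)"] allI impI)
  fix k j assume k: "k < N" and j: "j < N"
  have "ae_eq (u k j) (A1 k (S2 j (\<lambda>z. 1)))"
    using ae_eq_sym[OF transition_mult[OF u k j L2_const[of 1]]] by simp
  also have "ae_eq \<dots> (mean_proj (A1 k (S2 j (\<lambda>z. 1))))"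
    using transition_commutes[OF S1 S2 mean_proj_bounded agree k j L2_const[of 1]] by (simp add: mean_proj_one)
  finally show "ae_eq (u k j) (\<lambda>z. inner2 (A1 k (S2 j (\<lambda>z. 1))) (\<lambda>z. 1))" by (simp add: mean_proj_def)
qed

end

lemma intertwines_agree:
  assumes "intertwines N S1 a" "intertwines N S2 a" "Linf \<phi>"
  shows "op_eq (alphaS N S1 (mult_op \<phi>)) (alphaS N S2 (mult_op \<phi>))"
  using assms unfolding intertwines_def op_eq_def by (meson ae_eq_sym ae_eq_trans)

lemma intertwines_iff_if_agree:
  assumes "\<And>\<phi>. Linf \<phi> \<Longrightarrow> op_eq (alphaS N S1 (mult_op \<phi>)) (alphaS N S2 (mult_op \<phi>))"
  shows "intertwines N S1 a \<longleftrightarrow> intertwines N S2 a"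
  using assms unfolding intertwines_def op_eq_def by (meson ae_eq_sym ae_eq_trans)

theorem corollary5p3:
  fixes N :: nat and a :: "nat \<Rightarrow> complex" and S1 S2 :: "nat \<Rightarrow> op"
  assumes zeros: "\<forall>j<N. cmod (a j) < 1"
  shows "(cuntz_family N S1 \<and> cuntz_family N S2 \<and> intertwines N S1 a \<and> intertwines N S2 a
            \<longrightarrow> (\<exists>u. unitary_Linf N u \<and> linked N S1 S2 u))
       \<and> (\<forall>u. cuntz_family N S1 \<and> cuntz_family N S2 \<and> unitary_Linf N u \<and> linked N S1 S2 u
            \<longrightarrow> ((intertwines N S1 a \<longleftrightarrow> intertwines N S2 a) \<and>
                 ((\<forall>T. bounded_op T \<longrightarrow> op_eq (alphaS N S1 T) (alphaS N S2 T))
                    \<longleftrightarrow> constant_matrix N u)))"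
proof (intro conjI allI impI)
  assume H: "cuntz_family N S1 \<and> cuntz_family N S2 \<and> intertwines N S1 a \<and> intertwines N S2 a"
  then interpret cuntz_pair N S1 S2 by unfold_locales auto
  have "transition_matrix N S1 S2 (\<lambda>i j. A1 i (S2 j (\<lambda>z. 1)))"
    using H by (intro transition_exists intertwines_agree) auto
  then show "\<exists>u. unitary_Linf N u \<and> linked N S1 S2 u"
    using transition_unitary transition_imp_linked by blast
next
  fix u assume H: "cuntz_family N S1 \<and> cuntz_family N S2 \<and> unitary_Linf N u \<and> linked N S1 S2 u"
  then interpret cuntz_pair N S1 S2 by unfold_locales auto
  have u: "transition_matrix N S1 S2 u"
    using H by (intro linked_imp_transition) (auto simp: unitary_Linf_def)
  show "intertwines N S1 a \<longleftrightarrow> intertwines N S2 a"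
    by (rule intertwines_iff_if_agree[OF alphaS_mult_agree[OF u]])
  show "(\<forall>T. bounded_op T \<longrightarrow> op_eq (alphaS N S1 T) (alphaS N S2 T)) \<longleftrightarrow> constant_matrix N u"
    using constant_if_alphaS_agree[OF u] mean_proj_bounded alphaS_agree_if_constant[OF u] by blast
qed

end
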